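(* Let $k$ be a field of characteristic $0$, let $\mathcal C$ be a small category with finitely many objects $X_1,\dots,X_n$, and let $\alpha:L(\mathcal C)\to k$ be a pseudocharacter of $\mathcal C$. Let $A$ be the $k$-algebra of matrices $x=(x_{ij})_{1\le i,j\le n}$ with $x_{ij}\in k\,\mathrm{Hom}_{\mathcal C}(X_j,X_i)$ (finite $k$-linear combinations of morphisms), with multiplication $(xy)_{ij}=\sum_{l}x_{il}y_{lj}$ given by bilinearly extended composition (i.e. $A=\mathrm{End}(X_1\oplus\dots\oplus X_n)$ in the additive envelope of the $k$-linearization of $\mathcal C$), and let $\tau:A\to k$, $\tau(x)=\sum_{i=1}^n\alpha_{X_i}(x_{ii})$. Then $\tau(xy)=\tau(yx)$, $\tau$ is a pseudocharacter of $A$, and $$\deg_\tau(A)=\sum_{i=1}^n\deg_\alpha(X_i).$$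
   Context: Loops. $L(\mathcal C)$ is the set of pairs $(X,\beta)$, $\beta\in\mathrm{End}_{\mathcal C}(X)$, modulo the equivalence relation generated by $(X,\gamma\beta)\sim(Y,\beta\gamma)$ for $\beta:X\to Y$, $\gamma:Y\to X$. Pseudocharacters of algebras. For a $k$-algebra $A$ and a $k$-linear $\tau:A\to k$ with $\tau(ab)=\tau(ba)$, and $a_1,\dots,a_n\in A$, set $S^\tau_n(a_1,\dots,a_n)=\sum_{\sigma\in S_n}\mathrm{sgn}(\sigma)\prod_{c}\tau(a_{i_1}a_{i_2}\cdots a_{i_r})$, the product over all cycles $c=(i_1\,i_2\,\dots\,i_r)$ of $\sigma$ (fixed points included), where $\sigma(i_j)=i_{j+1}$. (This is the $\alpha$-evaluation of the closure of $(a_1\otimes\dots\otimes a_n)$ composed with the antisymmetrizer $\sum_\sigma\mathrm{sgn}(\sigma)\sigma$ in the Brauer category.) The degree $\deg_\tau(A)$ is the least integer $d\ge0$ such that $S^\tau_{d+1}$ vanishes identically on $A^{d+1}$ ($\infty$ if none); $\tau$ is a pseudocharacter of $A$ if $\deg_\tau(A)<\infty$. Pseudocharacters of categories. For $\alpha:L(\mathcal C)\to k$ and an object $X$, let $\alpha_X:k\,\mathrm{End}_{\mathcal C}(X)\to k$ be the linear extension of $\beta\mapsto\alpha([(X,\beta)])$ (it satisfies $\alpha_X(ab)=\alpha_X(ba)$). Put $\deg_\alpha(X)=\deg_{\alpha_X}(k\,\mathrm{End}_{\mathcal C}(X))$. The map $\alpha$ is a pseudocharacter of $\mathcal C$ (equivalently,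 a pseudo-TQFT for the Brauer envelope of $\mathcal C$) if $\deg_\alpha(X)<\infty$ for every object $X$. *)

theory Defs
  imports "HOL-Combinatorics.Permutations" "HOL-Library.Extended_Nat"
begin

fun mprod :: "('x \<Rightarrow> 'x \<Rightarrow> 'x) \<Rightarrow> 'x list \<Rightarrow> 'x" where
  "mprod mul [] = undefined"
| "mprod mul [x] = x"
| "mprod mul (x # y # ys) = mul x (mprod mul (y # ys))"

definition orb :: "(nat \<Rightarrow> nat) \<Rightarrow> nat \<Rightarrow> nat set" where
  "orb p i = {(p ^^ k) i | k. True}"

text \<open>Each cycle is represented by its least element (the value does not depend on
  this choice since tau is a trace).\<close>
definition cyc_word :: "('x \<Rightarrow> 'x \<Rightarrow> 'x) \<Rightarrow> (nat \<Rightarrow> 'x) \<Rightarrow> (nat \<Rightarrow> nat) \<Rightarrow> nat \<Rightarrow> 'x" where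
  "cyc_word mul a p i = mprod mul (map (\<lambda>k. a ((p ^^ k) i)) [0..<card (orb p i)])"

text \<open>S^tau_n(a_1,...,a_n) (indices shifted to 0..n-1).\<close>
definition S_tau :: "('x \<Rightarrow> 'x \<Rightarrow> 'x) \<Rightarrow> ('x \<Rightarrow> 'k::comm_ring_1) \<Rightarrow> nat \<Rightarrow> (nat \<Rightarrow> 'x) \<Rightarrow> 'k" where
  "S_tau mul tau n a =
     (\<Sum>p\<in>{p. p permutes {..<n}}. of_int (sign p) *
        (\<Prod>i\<in>{i. i < n \<and> i = Min (orb p i)}. tau (cyc_word mul a p i)))"

definition S_vanishes :: "'x set \<Rightarrow> ('x \<Rightarrow> 'x \<Rightarrow> 'x) \<Rightarrow> ('x \<Rightarrow> 'k::comm_ring_1) \<Rightarrow> nat \<Rightarrow> bool" where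
  "S_vanishes A mul tau n \<longleftrightarrow> (\<forall>a. (\<forall>i<n. a i \<in> A) \<longrightarrow> S_tau mul tau n a = 0)"

definition alg_deg :: "'x set \<Rightarrow> ('x \<Rightarrow> 'x \<Rightarrow> 'x) \<Rightarrow> ('x \<Rightarrow> 'k::comm_ring_1) \<Rightarrow> enat" where
  "alg_deg A mul tau =
     (if \<exists>d. S_vanishes A mul tau (Suc d)
      then enat (LEAST d. S_vanishes A mul tau (Suc d)) else \<infinity>)"

text \<open>Hom i j = morphisms from object i to object j; cmp g f = g \<circ> f
  (first f, then g); idm i = identity of object i.\<close>
definition is_category :: "nat \<Rightarrow> (nat \<Rightarrow> nat \<Rightarrow> 'm set) \<Rightarrow> ('m \<Rightarrow> 'm \<Rightarrow> 'm) \<Rightarrow> (nat \<Rightarrow> 'm) \<Rightarrow> bool" where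
  "is_category n Hom cmp idm \<longleftrightarrow>
     (\<forall>i<n. \<forall>j<n. \<forall>i'<n. \<forall>j'<n. (i, j) \<noteq> (i', j') \<longrightarrow> Hom i j \<inter> Hom i' j' = {}) \<and>
     (\<forall>i<n. \<forall>j<n. \<forall>l<n. \<forall>f\<in>Hom i j. \<forall>g\<in>Hom j l. cmp g f \<in> Hom i l) \<and>
     (\<forall>i<n. \<forall>j<n. \<forall>l<n. \<forall>m<n. \<forall>f\<in>Hom i j. \<forall>g\<in>Hom j l. \<forall>h\<in>Hom l m.
         cmp h (cmp g f) = cmp (cmp h g) f) \<and>
     (\<forall>i<n. idm i \<in> Hom i i) \<and>
     (\<forall>i<n. \<forall>j<n. \<forall>f\<in>Hom i j. cmp f (idm i) = f \<and> cmp (idm j) f = f)"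

definition loops :: "nat \<Rightarrow> (nat \<Rightarrow> nat \<Rightarrow> 'm set) \<Rightarrow> (nat \<times> 'm) set" where
  "loops n Hom = {(i, b). i < n \<and> b \<in> Hom i i}"

definition loop_rel :: "nat \<Rightarrow> (nat \<Rightarrow> nat \<Rightarrow> 'm set) \<Rightarrow> ('m \<Rightarrow> 'm \<Rightarrow> 'm) \<Rightarrow> ((nat \<times> 'm) \<times> (nat \<times> 'm)) set" where
  "loop_rel n Hom cmp =
     {((i, cmp g b), (j, cmp b g)) | i j b g. i < n \<and> j < n \<and> b \<in> Hom i j \<and> g \<in> Hom j i}"

definition loop_equiv :: "nat \<Rightarrow> (nat \<Rightarrow> nat \<Rightarrow> 'm set) \<Rightarrow> ('m \<Rightarrow> 'm \<Rightarrow> 'm) \<Rightarrow> ((nat \<times> 'm) \<times> (nat \<times> 'm)) set" where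
  "loop_equiv n Hom cmp = (loop_rel n Hom cmp \<union> (loop_rel n Hom cmp)\<inverse>)\<^sup>*"

text \<open>A map alpha : L(C) \<rightarrow> k, i.e. a function on loops constant on equivalence classes.\<close>
definition loop_function :: "nat \<Rightarrow> (nat \<Rightarrow> nat \<Rightarrow> 'm set) \<Rightarrow> ('m \<Rightarrow> 'm \<Rightarrow> 'm) \<Rightarrow> (nat \<times> 'm \<Rightarrow> 'k) \<Rightarrow> bool" where
  "loop_function n Hom cmp \<alpha> \<longleftrightarrow> (\<forall>(p, q) \<in> loop_equiv n Hom cmp. \<alpha> p = \<alpha> q)"

text \<open>k S: finite k-linear combinations of elements of S (finitely supported functions).\<close>
definition lin :: "'m set \<Rightarrow> ('m \<Rightarrow> 'k::zero) set" where
  "lin S = {a. finite {f. a f \<noteq> 0} \<and> {f. a f \<noteq> 0} \<subseteq> S}"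

definition conv :: "('m \<Rightarrow> 'm \<Rightarrow> 'm) \<Rightarrow> ('m \<Rightarrow> 'k::comm_ring_1) \<Rightarrow> ('m \<Rightarrow> 'k) \<Rightarrow> 'm \<Rightarrow> 'k" where
  "conv cmp a b h = (\<Sum>f\<in>{f. a f \<noteq> 0}. \<Sum>g\<in>{g. b g \<noteq> 0}. if cmp f g = h then a f * b g else 0)"

definition alpha_lin :: "(nat \<times> 'm \<Rightarrow> 'k::comm_ring_1) \<Rightarrow> nat \<Rightarrow> ('m \<Rightarrow> 'k) \<Rightarrow> 'k" where
  "alpha_lin \<alpha> i a = (\<Sum>b\<in>{b. a b \<noteq> 0}. a b * \<alpha> (i, b))"

definition obj_deg :: "(nat \<Rightarrow> nat \<Rightarrow> 'm set) \<Rightarrow> ('m \<Rightarrow> 'm \<Rightarrow> 'm) \<Rightarrow> (nat \<times> 'm \<Rightarrow> 'k::comm_ring_1) \<Rightarrow> nat \<Rightarrow> enat" where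
  "obj_deg Hom cmp \<alpha> i = alg_deg (lin (Hom i i)) (conv cmp) (alpha_lin \<alpha> i)"

definition pseudocharacter_cat :: "nat \<Rightarrow> (nat \<Rightarrow> nat \<Rightarrow> 'm set) \<Rightarrow> ('m \<Rightarrow> 'm \<Rightarrow> 'm) \<Rightarrow> (nat \<times> 'm \<Rightarrow> 'k::comm_ring_1) \<Rightarrow> bool" where
  "pseudocharacter_cat n Hom cmp \<alpha> \<longleftrightarrow>
     loop_function n Hom cmp \<alpha> \<and> (\<forall>i<n. obj_deg Hom cmp \<alpha> i \<noteq> \<infinity>)"

definition mat_alg :: "nat \<Rightarrow> (nat \<Rightarrow> nat \<Rightarrow> 'm set) \<Rightarrow> (nat \<Rightarrow> nat \<Rightarrow> 'm \<Rightarrow> 'k::zero) set" where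
  "mat_alg n Hom = {x. (\<forall>i<n. \<forall>j<n. x i j \<in> lin (Hom j i)) \<and>
                       (\<forall>i j. (n \<le> i \<or> n \<le> j) \<longrightarrow> x i j = (\<lambda>_. 0))}"

definition mat_mult :: "nat \<Rightarrow> ('m \<Rightarrow> 'm \<Rightarrow> 'm) \<Rightarrow> (nat \<Rightarrow> nat \<Rightarrow> 'm \<Rightarrow> 'k::comm_ring_1)
                        \<Rightarrow> (nat \<Rightarrow> nat \<Rightarrow> 'm \<Rightarrow> 'k) \<Rightarrow> (nat \<Rightarrow> nat \<Rightarrow> 'm \<Rightarrow> 'k)" where
  "mat_mult n cmp x y = (\<lambda>i j h. if i < n \<and> j < n then (\<Sum>l<n. conv cmp (x i l) (y l j) h) else 0)"

definition mat_trace :: "nat \<Rightarrow> (nat \<times> 'm \<Rightarrow> 'k::comm_ring_1) \<Rightarrow> (nat \<Rightarrow> nat \<Rightarrow> 'm \<Rightarrow> 'k) \<Rightarrow> 'k" where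
  "mat_trace n \<alpha> x = (\<Sum>i<n. alpha_lin \<alpha> i (x i i))"

end

theory Submission
  imports Defs "HOL-Library.Function_Algebras" "HOL-Combinatorics.Orbits"
begin

text \<open>
  Sorting the permutations of m + 1 points by whether m is fixed or is inserted into the cycle of
  some j < m yields the recursion
  \<open>S (m + 1) a = \<tau> (a m) * S m a - (\<Sum>j<m. S m (a with a j replaced by a j * a m))\<close>.
  So vanishing of S in degree d + 1 propagates to all higher degrees, and S is multilinear and
  invariant under permuting its arguments.

  Upper bound: expand each matrix argument into its block components. By pigeonhole some object
  X_x occurs as block row index more than deg(X_x) times; the recursion absorbs the entries of
  other rows into the remaining ones, which reduces S to the S of alpha_(X_x) on more than deg(X_x)
  endomorphisms of X_x, and that vanishes.

  Lower bound: block-diagonal matrices supported on different diagonal positions multiply to zero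
  in one order, so S of a concatenation of such tuples is the product of the S-values computed
  in the endomorphism algebras, which is nonzero when each factor is.
\<close>

section \<open>Cycles of permutations\<close>

lemma orb_eq_orbit: "permutation p \<Longrightarrow> orb p i = orbit p i"
  unfolding orb_def by (simp add: orbit_altdef_permutation)

lemma funpow_in_orb [simp]: "(p ^^ k) i \<in> orb p i"
  unfolding orb_def by auto

lemma self_in_orb [simp]: "i \<in> orb p i"
  using funpow_in_orb[where k=0] by simp

lemma orb_funpow: "permutation p \<Longrightarrow> orb p ((p ^^ k) i) = orb p i"
  by (induction k) (simp_all add: orb_eq_orbit permutation_orbit_step)

lemma orb_apply: "permutation p \<Longrightarrow> orb p (p i) = orb p i"
  using orb_funpow[of p 1] by simp

lemma orb_eq_if_mem: "permutation p \<Longrightarrow> j \<in> orb p i \<Longrightarrow> orb p j = orb p i"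
  by (auto simp: orb_def[of p i] orb_funpow)

lemma apply_in_orb: "permutation p \<Longrightarrow> j \<in> orb p i \<Longrightarrow> p j \<in> orb p i"
  by (metis orb_apply orb_eq_if_mem self_in_orb)

lemma apply_notin_orb: "permutation p \<Longrightarrow> j \<notin> orb p i \<Longrightarrow> p j \<notin> orb p i"
  by (metis orb_apply orb_eq_if_mem self_in_orb)

lemma orb_subset: "x \<in> U \<Longrightarrow> (\<And>y. y \<in> U \<Longrightarrow> f y \<in> U) \<Longrightarrow> orb f x \<subseteq> U"
proof -
  assume "x \<in> U" and closed: "\<And>y. y \<in> U \<Longrightarrow> f y \<in> U"
  then have "(f ^^ k) x \<in> U" for k by (induction k) auto
  then show ?thesis unfolding orb_def by auto
qed

lemma finite_orb: "permutation p \<Longrightarrow> finite (orb p i)"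
  by (simp add: orb_eq_orbit finite_orbit permutation_self_in_orbit)

lemma card_orb_eq_funpow_dist1: "permutation p \<Longrightarrow> card (orb p i) = funpow_dist1 p i i"
proof -
  assume p: "permutation p"
  have i: "i \<in> orbit p i" by (simp add: p permutation_self_in_orbit)
  show ?thesis unfolding orb_eq_orbit[OF p] orbit_conv_funpow_dist1[OF i]
    using inj_on_funpow_dist1[OF i] by (simp add: card_image)
qed

lemma card_orb_pos: "permutation p \<Longrightarrow> 0 < card (orb p i)"
  by (simp add: card_orb_eq_funpow_dist1)

lemma funpow_card_orb: "permutation p \<Longrightarrow> (p ^^ card (orb p i)) i = i"
  using funpow_dist1_prop[OF permutation_self_in_orbit, of p i] by (simp add: card_orb_eq_funpow_dist1)

lemma funpow_neq_self_below_card_orb: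
  "permutation p \<Longrightarrow> 0 < t \<Longrightarrow> t < card (orb p i) \<Longrightarrow> (p ^^ t) i \<noteq> i"
  by (simp add: card_orb_eq_funpow_dist1 funpow_dist1_least)

lemma orb_fixpoint: "p i = i \<Longrightarrow> orb p i = {i}"
proof -
  assume "p i = i"
  then have "(p ^^ k) i = i" for k by (induction k) auto
  then show ?thesis unfolding orb_def by auto
qed

lemma permutation_if_permutes_lessThan: "p permutes {..<(N::nat)} \<Longrightarrow> permutation p"
  using permutation_permutes by blast

lemma orb_subset_lessThan: "p permutes {..<(N::nat)} \<Longrightarrow> i < N \<Longrightarrow> orb p i \<subseteq> {..<N}"
  by (rule orb_subset) (use permutes_in_image[of p "{..<N}"] in auto)

lemma funpow_permutes_lessThan: "p permutes {..<(N::nat)} \<Longrightarrow> i < N \<Longrightarrow> (p ^^ k) i < N"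
  using orb_subset_lessThan funpow_in_orb by blast

lemma Min_orb_in: "permutation p \<Longrightarrow> Min (orb p i) \<in> orb p i"
  using finite_orb self_in_orb by (metis Min_in empty_iff)

lemma invariant_on_orb:
  assumes p: "p permutes {..<(N::nat)}" and g: "\<And>i. i < N \<Longrightarrow> g (p i) = g i"
    and i: "i < N" and j: "j \<in> orb p i"
  shows "g j = g i"
proof -
  have "g ((p ^^ k) i) = g i" for k
    by (induction k) (simp_all add: g funpow_permutes_lessThan[OF p i])
  then show ?thesis using j unfolding orb_def by auto
qed

definition cycle_reps :: "(nat \<Rightarrow> nat) \<Rightarrow> nat \<Rightarrow> nat set" where
  "cycle_reps p N = {i. i < N \<and> Min (orb p i) = i}"

lemma finite_cycle_reps [simp]: "finite (cycle_reps p N)"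
  unfolding cycle_reps_def by auto

lemma mem_cycle_reps: "i \<in> cycle_reps p N \<longleftrightarrow> i < N \<and> Min (orb p i) = i"
  by (simp add: cycle_reps_def)

lemma cycle_reps_Suc_fixpoint: "p m = m \<Longrightarrow> cycle_reps p (Suc m) = insert m (cycle_reps p m)"
  unfolding cycle_reps_def by (auto simp: orb_fixpoint less_Suc_eq)

lemma S_tau_cycle_reps: "S_tau mul tau N a =
  (\<Sum>p | p permutes {..<N}. of_int (sign p) * (\<Prod>i\<in>cycle_reps p N. tau (cyc_word mul a p i)))"
  unfolding S_tau_def cycle_reps_def by (simp add: eq_commute)

lemma prod_cycle_reps_extract:
  assumes p: "p permutes {..<(N::nat)}" and g: "\<And>i. i < N \<Longrightarrow> g (p i) = g i" and j: "j < N"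
  shows "(\<Prod>i\<in>cycle_reps p N. g i) = g j * (\<Prod>i\<in>cycle_reps p N - orb p j. g i)"
proof -
  have pp: "permutation p" using permutation_if_permutes_lessThan[OF p] .
  define r where "r = Min (orb p j)"
  have r_orb: "r \<in> orb p j" unfolding r_def using Min_orb_in[OF pp] .
  have orb_r: "orb p r = orb p j" using orb_eq_if_mem[OF pp r_orb] .
  have r_rep: "r \<in> cycle_reps p N"
    unfolding cycle_reps_def using orb_r r_def orb_subset_lessThan[OF p j] r_orb by auto
  have "cycle_reps p N - {r} = cycle_reps p N - orb p j"
    using r_orb orb_eq_if_mem[OF pp] unfolding cycle_reps_def r_def by auto
  moreover have "g r = g j" using invariant_on_orb[where g=g, OF p g j r_orb] .
  ultimately show ?thesis using prod.remove[OF finite_cycle_reps r_rep, of g] by simp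
qed

lemma prod_cycle_reps_orbits:
  assumes p: "p permutes {..<(N::nat)}"
  shows "(\<Prod>i\<in>cycle_reps p N. g i) = (\<Prod>C\<in>orb p ` {..<N}. g (Min C))"
proof -
  have pp: "permutation p" using permutation_if_permutes_lessThan[OF p] .
  have inj: "inj_on (orb p) (cycle_reps p N)" unfolding cycle_reps_def by (rule inj_onI) auto
  have "orb p i \<in> orb p ` cycle_reps p N" if "i < N" for i
  proof -
    have "Min (orb p i) \<in> cycle_reps p N" "orb p (Min (orb p i)) = orb p i"
      using orb_eq_if_mem[OF pp Min_orb_in[OF pp]] orb_subset_lessThan[OF p that] Min_orb_in[OF pp]
      unfolding cycle_reps_def by auto
    then show ?thesis by (metis image_eqI)
  qed
  then have "orb p ` cycle_reps p N = orb p ` {..<N}" by (auto simp: cycle_reps_def)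
  then have "(\<Prod>C\<in>orb p ` {..<N}. g (Min C)) = (\<Prod>i\<in>cycle_reps p N. g (Min (orb p i)))"
    using prod.reindex[OF inj] by (simp add: comp_def)
  also have "\<dots> = (\<Prod>i\<in>cycle_reps p N. g i)" by (rule prod.cong) (auto simp: cycle_reps_def)
  finally show ?thesis by simp
qed

lemma sum_permutes_lessThan_Suc:
  "(\<Sum>p | p permutes {..<Suc m}. f p) =
     (\<Sum>p | p permutes {..<m}. f p) + (\<Sum>p | p permutes {..<m}. \<Sum>j<m. f (p \<circ> transpose j m))"
proof -
  let ?P = "{p. p permutes {..<m}}"
  have bij_q: "bij q" if "q \<in> ?P" for q using that permutes_bij by blast
  have "(\<Sum>p | p permutes {..<Suc m}. f p) = (\<Sum>p | p permutes insert m {..<m}. f (inv p))"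
    by (simp add: lessThan_Suc sum_permutations_inverse[of f])
  also have "\<dots> = (\<Sum>b\<in>insert m {..<m}. \<Sum>q\<in>?P. f (inv (transpose m b \<circ> q)))"
    by (rule sum_over_permutations_insert) auto
  also have "\<dots> = (\<Sum>b\<in>insert m {..<m}. \<Sum>q\<in>?P. f (inv q \<circ> transpose m b))"
    by (intro sum.cong refl) (simp add: o_inv_distrib bij_q)
  also have "\<dots> = (\<Sum>b\<in>insert m {..<m}. \<Sum>q\<in>?P. f (q \<circ> transpose m b))"
  proof (rule sum.cong[OF refl])
    fix b
    show "(\<Sum>q\<in>?P. f (inv q \<circ> transpose m b)) = (\<Sum>q\<in>?P. f (q \<circ> transpose m b))"
      using sum_permutations_inverse[of "\<lambda>q. f (q \<circ> transpose m b)" "{..<m}"] by simp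
  qed
  also have "\<dots> = (\<Sum>q\<in>?P. f q) + (\<Sum>j<m. \<Sum>q\<in>?P. f (q \<circ> transpose j m))"
    by (simp add: transpose_commute)
  finally show ?thesis by (simp add: sum.swap[of _ "{..<m}"])
qed

section \<open>Cycle words\<close>

lemma mprod_Cons: "ys \<noteq> [] \<Longrightarrow> mprod mul (x # ys) = mul x (mprod mul ys)"
  by (cases ys) auto

lemma cyc_word_cong:
  assumes "p permutes {..<(N::nat)}" "i < N" "\<And>j. j < N \<Longrightarrow> a j = b j"
  shows "cyc_word mul a p i = cyc_word mul b p i"
  unfolding cyc_word_def using assms funpow_permutes_lessThan by (intro arg_cong[where f="mprod mul"]) auto

lemma S_tau_cong:
  assumes "\<And>j. j < N \<Longrightarrow> a j = b j"
  shows "S_tau mul tau N a = S_tau mul tau N b"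
  unfolding S_tau_cycle_reps
  by (intro sum.cong refl arg_cong2[where f="(*)"] prod.cong)
     (auto simp: cycle_reps_def intro!: arg_cong[where f=tau] cyc_word_cong[OF _ _ assms])

lemma S_tau_0 [simp]: "S_tau mul tau 0 a = 1"
proof -
  have "{p. p permutes ({}::nat set)} = {id}" by (auto simp: permutes_empty)
  then show ?thesis unfolding S_tau_cycle_reps cycle_reps_def by simp
qed

lemma cyc_word_fixpoint: "p i = i \<Longrightarrow> cyc_word mul a p i = a i"
  unfolding cyc_word_def by (simp add: orb_fixpoint)

lemma cyc_word_upd_other:
  assumes p: "permutation p" and i: "i \<notin> orb p j"
  shows "cyc_word mul (a(j := x)) p i = cyc_word mul a p i"
proof -
  have "(p ^^ k) i \<noteq> j" for k
    using i orb_eq_if_mem[OF p, of j i] orb_funpow[OF p, of k i] by (metis self_in_orb)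
  then show ?thesis unfolding cyc_word_def by (intro arg_cong[where f="mprod mul"]) auto
qed

lemma cyc_word_upd_self:
  assumes p: "permutation p"
  shows "cyc_word mul (a(j := x)) p j = mprod mul (x # map (\<lambda>k. a ((p ^^ k) j)) [1..<card (orb p j)])"
proof -
  have "[0..<card (orb p j)] = 0 # [1..<card (orb p j)]"
    using card_orb_pos[OF p] by (simp add: upt_conv_Cons)
  moreover have "map (\<lambda>k. (a(j := x)) ((p ^^ k) j)) [1..<card (orb p j)] = map (\<lambda>k. a ((p ^^ k) j)) [1..<card (orb p j)]"
    by (rule map_cong[OF refl]) (use funpow_neq_self_below_card_orb[OF p] in auto)
  ultimately show ?thesis unfolding cyc_word_def by (simp only: list.map fun_upd_same funpow_0)
qed

lemma funpow_conj:
  assumes "bij \<pi>"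
  shows "((inv \<pi> \<circ> p \<circ> \<pi>) ^^ k) i = inv \<pi> ((p ^^ k) (\<pi> i))"
  by (induction k) (simp_all add: assms bij_inv_eq_iff)

lemma orb_conj: "bij \<pi> \<Longrightarrow> orb (inv \<pi> \<circ> p \<circ> \<pi>) i = inv \<pi> ` orb p (\<pi> i)"
  unfolding orb_def funpow_conj by auto

lemma cyc_word_conj:
  assumes "bij \<pi>"
  shows "cyc_word mul (a \<circ> \<pi>) (inv \<pi> \<circ> p \<circ> \<pi>) i = cyc_word mul a p (\<pi> i)"
proof -
  have "card (orb (inv \<pi> \<circ> p \<circ> \<pi>) i) = card (orb p (\<pi> i))"
    unfolding orb_conj[OF assms] using assms bij_is_inj inj_on_subset
    by (metis bij_imp_bij_inv card_image subset_UNIV)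
  then show ?thesis unfolding cyc_word_def funpow_conj[OF assms] by (simp add: surj_f_inv_f[OF bij_is_surj[OF assms]])
qed

text \<open>For q a permutation of \<open>{..<m}\<close>, the cycle of \<open>q \<circ> transpose j m\<close> through j is that
  of q with the new point m inserted right after j; all other cycles are those of q. On the level
  of cycle words this replaces \<open>a j\<close> by the product \<open>a j * a m\<close>.\<close>
context
  fixes q q' :: "nat \<Rightarrow> nat" and j m :: nat
  assumes q: "q permutes {..<m}" and j: "j < m" and q': "q' = q \<circ> transpose j m"
begin

lemma fixes_new_point [simp]: "q m = m"
  using permutes_not_in[OF q] by simp

lemma permutes_merge: "q' permutes {..<Suc m}"
  unfolding q'
proof (rule permutes_compose)
  show "q permutes {..<Suc m}" using permutes_subset[OF q] by auto
  show "transpose j m permutes {..<Suc m}" using j by (intro permutes_swap_id) auto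
qed

lemma merge_apply_first [simp]: "q' j = m"
  by (simp add: q')

lemma merge_apply_second [simp]: "q' m = q j"
  by (simp add: q')

lemma merge_apply_other: "y \<noteq> j \<Longrightarrow> y \<noteq> m \<Longrightarrow> q' y = q y"
  by (simp add: q')

lemma orb_merge_self: "orb q' j = insert m (orb q j)"
proof -
  have pq: "permutation q" using permutation_if_permutes_lessThan[OF q] .
  have pq': "permutation q'" using permutation_if_permutes_lessThan[OF permutes_merge] .
  have m_in: "m \<in> orb q' j" using funpow_in_orb[where p=q' and k=1 and i=j] by simp
  have "orb q' j \<subseteq> insert m (orb q j)"
  proof (rule orb_subset)
    fix y assume "y \<in> insert m (orb q j)"
    then show "q' y \<in> insert m (orb q j)"
      using apply_in_orb[OF pq] orb_subset_lessThan[OF q j] merge_apply_other by (cases "y = j") auto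
  qed simp
  moreover have "orb q j \<subseteq> orb q' j"
  proof (rule orb_subset)
    fix y assume y: "y \<in> orb q' j"
    consider "y = j" | "y = m" | "y \<noteq> j" "y \<noteq> m" by blast
    then show "q y \<in> orb q' j"
    proof cases
      case 1 then show ?thesis using apply_in_orb[OF pq' m_in] by simp
    next
      case 2 then show ?thesis using m_in by simp
    next
      case 3 then show ?thesis using apply_in_orb[OF pq' y] merge_apply_other by simp
    qed
  qed simp
  ultimately show ?thesis using m_in by auto
qed

lemma card_orb_merge_self: "card (orb q' j) = Suc (card (orb q j))"
proof -
  have "m \<notin> orb q j" using orb_subset_lessThan[OF q j] by auto
  then show ?thesis
    using orb_merge_self finite_orb[OF permutation_if_permutes_lessThan[OF q]] by simp
qed

lemma funpow_merge_other:
  assumes i: "i \<notin> orb q' j"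
  shows "(q' ^^ k) i = (q ^^ k) i \<and> (q' ^^ k) i \<notin> orb q' j"
proof (induction k)
  case (Suc k)
  have pq': "permutation q'" using permutation_if_permutes_lessThan[OF permutes_merge] .
  have eq: "(q' ^^ k) i = (q ^^ k) i" and out: "(q' ^^ k) i \<notin> orb q' j" using Suc by auto
  have "(q' ^^ k) i \<noteq> j" "(q' ^^ k) i \<noteq> m" using out unfolding orb_merge_self by auto
  then have "q' ((q' ^^ k) i) = q ((q ^^ k) i)" using merge_apply_other eq by simp
  moreover have "q' ((q' ^^ k) i) \<notin> orb q' j" using apply_notin_orb[OF pq' out] .
  ultimately show ?case by simp
qed (simp add: i)

lemma orb_merge_other: "i \<notin> orb q' j \<Longrightarrow> orb q' i = orb q i"
proof -
  assume "i \<notin> orb q' j"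
  then have "(q' ^^ k) i = (q ^^ k) i" for k using funpow_merge_other by blast
  then show ?thesis unfolding orb_def by simp
qed

lemma cycle_reps_merge: "cycle_reps q' (Suc m) - orb q' j = cycle_reps q m - orb q j"
proof (intro set_eqI)
  fix i
  show "i \<in> cycle_reps q' (Suc m) - orb q' j \<longleftrightarrow> i \<in> cycle_reps q m - orb q j"
  proof (cases "i \<in> orb q' j")
    case True
    then have "i = m \<or> i \<in> orb q j" using orb_merge_self by simp
    then have "i \<notin> cycle_reps q m - orb q j" by (auto simp: mem_cycle_reps)
    then show ?thesis using True by blast
  next
    case False
    then have "i \<noteq> m" "i \<notin> orb q j" "orb q' i = orb q i"
      using orb_merge_self orb_merge_other by simp_all
    then have "i \<in> cycle_reps q' (Suc m) \<longleftrightarrow> i \<in> cycle_reps q m"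
      unfolding mem_cycle_reps by (simp add: less_Suc_eq)
    then show ?thesis using False \<open>i \<notin> orb q j\<close> by blast
  qed
qed

lemma funpow_merge_self: "0 < s \<Longrightarrow> s \<le> card (orb q j) \<Longrightarrow> (q' ^^ Suc s) j = (q ^^ s) j"
proof (induction s)
  case (Suc s)
  have pq: "permutation q" using permutation_if_permutes_lessThan[OF q] .
  show ?case
  proof (cases "s = 0")
    case True then show ?thesis by simp
  next
    case False
    have IH: "(q' ^^ Suc s) j = (q ^^ s) j" by (rule Suc.IH) (use False Suc.prems in auto)
    have "(q ^^ s) j \<noteq> j" using funpow_neq_self_below_card_orb[OF pq] False Suc.prems by simp
    moreover have "(q ^^ s) j \<noteq> m" using funpow_permutes_lessThan[OF q j] by (metis less_irrefl)
    moreover have "(q' ^^ Suc (Suc s)) j = q' ((q ^^ s) j)"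
      using IH funpow.simps(2)[THEN fun_cong, unfolded comp_apply, of "Suc s" q' j] by simp
    ultimately show ?thesis using merge_apply_other by simp
  qed
qed simp

lemma cyc_word_merge_self:
  "cyc_word mul a q' j = mprod mul (a j # a m # map (\<lambda>k. a ((q ^^ k) j)) [1..<card (orb q j)])"
proof -
  have "[0..<card (orb q j)] = 0 # [1..<card (orb q j)]"
    using card_orb_pos[OF permutation_if_permutes_lessThan[OF q]] by (simp add: upt_conv_Cons)
  then have upt: "[0..<card (orb q' j)] = 0 # 1 # map Suc [1..<card (orb q j)]"
    by (simp add: card_orb_merge_self upt_conv_Cons map_Suc_upt[symmetric] del: upt_Suc)
  have "map (\<lambda>k. a ((q' ^^ k) j)) (map Suc [1..<card (orb q j)]) = map (\<lambda>k. a ((q ^^ k) j)) [1..<card (orb q j)]"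
    unfolding map_map comp_def
  proof (rule map_cong[OF refl])
    fix k assume "k \<in> set [1..<card (orb q j)]"
    then have "0 < k" "k \<le> card (orb q j)" by auto
    then show "a ((q' ^^ Suc k) j) = a ((q ^^ k) j)" by (simp only: funpow_merge_self)
  qed
  moreover have "(q' ^^ 1) j = m" by simp
  ultimately show ?thesis unfolding cyc_word_def upt by (simp only: list.map funpow_0 id_apply)
qed

end

section \<open>Trace algebras\<close>

locale trace_algebra =
  fixes A :: "'x::ab_group_add set" and mul :: "'x \<Rightarrow> 'x \<Rightarrow> 'x" and tau :: "'x \<Rightarrow> 'k::comm_ring_1"
  assumes mul_closed: "\<lbrakk>a \<in> A; b \<in> A\<rbrakk> \<Longrightarrow> mul a b \<in> A"
    and mul_assoc: "\<lbrakk>a \<in> A; b \<in> A; c \<in> A\<rbrakk> \<Longrightarrow> mul (mul a b) c = mul a (mul b c)"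
    and trace_mul_commute: "\<lbrakk>a \<in> A; b \<in> A\<rbrakk> \<Longrightarrow> tau (mul a b) = tau (mul b a)"
    and zero_closed: "0 \<in> A"
    and add_closed: "\<lbrakk>a \<in> A; b \<in> A\<rbrakk> \<Longrightarrow> a + b \<in> A"
    and mul_add_right: "\<lbrakk>a \<in> A; b \<in> A; c \<in> A\<rbrakk> \<Longrightarrow> mul a (b + c) = mul a b + mul a c"
    and mul_add_left: "\<lbrakk>a \<in> A; b \<in> A; c \<in> A\<rbrakk> \<Longrightarrow> mul (b + c) a = mul b a + mul c a"
    and trace_add: "\<lbrakk>a \<in> A; b \<in> A\<rbrakk> \<Longrightarrow> tau (a + b) = tau a + tau b"
begin

abbreviation S where "S \<equiv> S_tau mul tau"

lemma sum_closed: "finite T \<Longrightarrow> (\<And>t. t \<in> T \<Longrightarrow> b t \<in> A) \<Longrightarrow> (\<Sum>t\<in>T. b t) \<in> A"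
  by (induction T rule: finite_induct) (auto simp: zero_closed add_closed)

lemma mprod_closed: "xs \<noteq> [] \<Longrightarrow> set xs \<subseteq> A \<Longrightarrow> mprod mul xs \<in> A"
proof (induction xs)
  case (Cons x ys)
  then show ?case by (cases ys) (auto simp: mul_closed)
qed simp

lemma mprod_snoc:
  "ys \<noteq> [] \<Longrightarrow> set ys \<subseteq> A \<Longrightarrow> x \<in> A \<Longrightarrow> mprod mul (ys @ [x]) = mul (mprod mul ys) x"
proof (induction ys)
  case (Cons y zs)
  show ?case
  proof (cases "zs = []")
    case False
    then have "mprod mul ((y # zs) @ [x]) = mul y (mul (mprod mul zs) x)"
      using Cons by (simp add: mprod_Cons)
    also have "\<dots> = mul (mul y (mprod mul zs)) x"
      using Cons False by (simp add: mul_assoc mprod_closed)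
    finally show ?thesis using False by (simp add: mprod_Cons)
  qed simp
qed simp

lemma trace_mprod_rotate:
  "x \<in> A \<Longrightarrow> set ys \<subseteq> A \<Longrightarrow> tau (mprod mul (x # ys)) = tau (mprod mul (ys @ [x]))"
  by (cases "ys = []") (auto simp: mprod_Cons mprod_snoc trace_mul_commute mprod_closed)

lemma trace_cyc_word_apply:
  assumes p: "p permutes {..<(N::nat)}" and i: "i < N" and a: "\<And>j. j < N \<Longrightarrow> a j \<in> A"
  shows "tau (cyc_word mul a p (p i)) = tau (cyc_word mul a p i)"
proof -
  have pp: "permutation p" using permutation_if_permutes_lessThan[OF p] .
  define L where "L = card (orb p i)"
  define f where "f k = a ((p ^^ k) i)" for k
  define T where "T = map f [1..<L]"
  have L: "0 < L" "card (orb p (p i)) = L"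
    unfolding L_def using card_orb_pos[OF pp] orb_apply[OF pp] by simp_all
  have T: "set T \<subseteq> A" unfolding T_def f_def using a funpow_permutes_lessThan[OF p i] by auto
  have "cyc_word mul a p i = mprod mul (f 0 # T)"
    unfolding cyc_word_def T_def f_def L_def[symmetric] using L by (simp add: upt_conv_Cons)
  moreover have "cyc_word mul a p (p i) = mprod mul (T @ [f 0])"
  proof -
    have "map (\<lambda>k. a ((p ^^ k) (p i))) [0..<L] = map (\<lambda>k. f (Suc k)) [0..<L]"
      unfolding f_def by (simp add: funpow_swap1)
    also have "\<dots> = map f [1..<Suc L]"
      by (simp only: map_Suc_upt[symmetric] map_map comp_def One_nat_def)
    also have "\<dots> = T @ [f 0]"
      unfolding T_def using L by (simp add: f_def L_def funpow_card_orb[OF pp])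
    finally show ?thesis unfolding cyc_word_def L by simp
  qed
  moreover have "f 0 \<in> A" unfolding f_def using a i by simp
  ultimately show ?thesis using trace_mprod_rotate[OF _ T] by (simp only:)
qed

lemma prod_cycle_reps_extract_cyc_word:
  assumes p: "p permutes {..<(N::nat)}" and a: "\<And>j. j < N \<Longrightarrow> a j \<in> A" and j: "j < N"
  shows "(\<Prod>i\<in>cycle_reps p N. tau (cyc_word mul a p i))
     = tau (cyc_word mul a p j) * (\<Prod>i\<in>cycle_reps p N - orb p j. tau (cyc_word mul a p i))"
  by (rule prod_cycle_reps_extract[OF p _ j]) (rule trace_cyc_word_apply[OF p _ a])

lemma prod_cycle_reps_merge:
  assumes q: "q permutes {..<m}" and j: "j < m" and a: "\<And>i. i < Suc m \<Longrightarrow> a i \<in> A"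
  shows "(\<Prod>i\<in>cycle_reps (q \<circ> transpose j m) (Suc m). tau (cyc_word mul a (q \<circ> transpose j m) i))
       = (\<Prod>i\<in>cycle_reps q m. tau (cyc_word mul (a(j := mul (a j) (a m))) q i))"
proof -
  let ?q' = "q \<circ> transpose j m" and ?a' = "a(j := mul (a j) (a m))"
  note merge = permutes_merge[OF q j refl] orb_merge_self[OF q j refl] cycle_reps_merge[OF q j refl]
  have pq: "permutation q" using permutation_if_permutes_lessThan[OF q] .
  have a': "?a' i \<in> A" if "i < m" for i using a that mul_closed[of "a j" "a m"] j by auto
  define T where "T = map (\<lambda>k. a ((q ^^ k) j)) [1..<card (orb q j)]"
  have T: "set T \<subseteq> A" unfolding T_def using funpow_permutes_lessThan[OF q j] by (auto intro: a less_SucI)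
  have aj: "a j \<in> A" "a m \<in> A" using a j by auto
  have self: "cyc_word mul a ?q' j = cyc_word mul ?a' q j"
    unfolding cyc_word_merge_self[OF q j refl] cyc_word_upd_self[OF pq] T_def[symmetric]
    using T aj by (cases "T = []") (simp_all add: mprod_Cons mul_assoc mprod_closed)
  have other: "cyc_word mul a ?q' i = cyc_word mul ?a' q i" if i: "i \<notin> orb ?q' j" for i
  proof -
    have "i \<notin> orb q j" using i merge(2) by simp
    then have "cyc_word mul ?a' q i = cyc_word mul a q i" by (rule cyc_word_upd_other[OF pq])
    also have "\<dots> = cyc_word mul a ?q' i"
      unfolding cyc_word_def orb_merge_other[OF q j refl i]
      using funpow_merge_other[OF q j refl i] by simp
    finally show ?thesis by simp
  qed
  have "(\<Prod>i\<in>cycle_reps ?q' (Suc m). tau (cyc_word mul a ?q' i))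
      = tau (cyc_word mul a ?q' j) * (\<Prod>i\<in>cycle_reps ?q' (Suc m) - orb ?q' j. tau (cyc_word mul a ?q' i))"
    using prod_cycle_reps_extract_cyc_word[OF merge(1) a] j by simp
  also have "\<dots> = tau (cyc_word mul ?a' q j) * (\<Prod>i\<in>cycle_reps q m - orb q j. tau (cyc_word mul ?a' q i))"
    unfolding self merge(3)[symmetric] using other by (intro arg_cong2[where f="(*)"] prod.cong) auto
  also have "\<dots> = (\<Prod>i\<in>cycle_reps q m. tau (cyc_word mul ?a' q i))"
    using prod_cycle_reps_extract_cyc_word[of q m ?a' j, OF q a' j] by simp
  finally show ?thesis .
qed

text \<open>The recursion obtained by expanding the antisymmetrizer along the last index.\<close>
lemma S_Suc:
  assumes a: "\<And>i. i < Suc m \<Longrightarrow> a i \<in> A"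
  shows "S (Suc m) a = tau (a m) * S m a - (\<Sum>j<m. S m (a(j := mul (a j) (a m))))"
proof -
  define F where "F N p = of_int (sign p) * (\<Prod>i\<in>cycle_reps p N. tau (cyc_word mul a p i))" for N p
  have fixing: "F (Suc m) p = tau (a m) * F m p" if p: "p permutes {..<m}" for p
  proof -
    have "p m = m" using permutes_not_in[OF p] by simp
    then show ?thesis
      unfolding F_def cycle_reps_Suc_fixpoint[of p m, OF \<open>p m = m\<close>]
      by (simp add: cyc_word_fixpoint mem_cycle_reps)
  qed
  have moving: "F (Suc m) (q \<circ> transpose j m)
      = - (of_int (sign q) * (\<Prod>i\<in>cycle_reps q m. tau (cyc_word mul (a(j := mul (a j) (a m))) q i)))"
    if q: "q permutes {..<m}" and j: "j < m" for q j
  proof -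
    have "sign (q \<circ> transpose j m) = - sign q"
      using j by (simp add: sign_compose permutation_if_permutes_lessThan[OF q] permutation_swap_id sign_swap_id)
    then show ?thesis unfolding F_def using prod_cycle_reps_merge[OF q j a] by simp
  qed
  have "(\<Sum>p | p permutes {..<m}. F (Suc m) p) = (\<Sum>p | p permutes {..<m}. tau (a m) * F m p)"
    by (rule sum.cong[OF refl]) (simp add: fixing)
  also have "\<dots> = tau (a m) * S m a" unfolding S_tau_cycle_reps F_def sum_distrib_left ..
  finally have first: "(\<Sum>p | p permutes {..<m}. F (Suc m) p) = tau (a m) * S m a" .
  have "(\<Sum>q | q permutes {..<m}. \<Sum>j<m. F (Suc m) (q \<circ> transpose j m))
      = (\<Sum>q | q permutes {..<m}. \<Sum>j<m.
          - (of_int (sign q) * (\<Prod>i\<in>cycle_reps q m. tau (cyc_word mul (a(j := mul (a j) (a m))) q i))))"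
    by (rule sum.cong[OF refl], rule sum.cong[OF refl]) (simp add: moving)
  also have "\<dots> = - (\<Sum>j<m. S m (a(j := mul (a j) (a m))))"
    unfolding S_tau_cycle_reps sum_negf by (rule arg_cong[where f=uminus], rule sum.swap)
  finally have second: "(\<Sum>q | q permutes {..<m}. \<Sum>j<m. F (Suc m) (q \<circ> transpose j m))
      = - (\<Sum>j<m. S m (a(j := mul (a j) (a m))))" .
  have "S (Suc m) a = (\<Sum>p | p permutes {..<m}. F (Suc m) p)
      + (\<Sum>q | q permutes {..<m}. \<Sum>j<m. F (Suc m) (q \<circ> transpose j m))"
    unfolding S_tau_cycle_reps F_def by (rule sum_permutes_lessThan_Suc)
  then show ?thesis unfolding first second by simp
qed

lemma S_vanishes_mono:
  assumes van: "S_vanishes A mul tau d" and "d \<le> m"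
  shows "S_vanishes A mul tau m"
  using \<open>d \<le> m\<close>
proof (induction m rule: dec_induct)
  case (step m)
  show ?case unfolding S_vanishes_def
  proof (intro allI impI)
    fix a assume a: "\<forall>i<Suc m. a i \<in> A"
    have "S m (a(j := mul (a j) (a m))) = 0" if "j < m" for j
      using step.IH a that mul_closed unfolding S_vanishes_def by auto
    moreover have "S m a = 0" using step.IH a unfolding S_vanishes_def by simp
    ultimately show "S (Suc m) a = 0" using S_Suc[of m a] a by simp
  qed
qed (rule van)

end

lemma sum_PiE_insert:
  assumes "k \<notin> K"
  shows "(\<Sum>\<psi>\<in>PiE (insert k K) (\<lambda>_. T). F \<psi>) = (\<Sum>(t, \<phi>)\<in>T \<times> PiE K (\<lambda>_. T). F (\<phi>(k := t)))"
proof -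
  have "(\<Sum>\<psi>\<in>PiE (insert k K) (\<lambda>_. T). F \<psi>) = (\<Sum>\<psi>\<in>(\<lambda>(y, g). g(k := y)) ` (T \<times> PiE K (\<lambda>_. T)). F \<psi>)"
    by (simp only: PiE_insert_eq)
  also have "\<dots> = (\<Sum>x\<in>T \<times> PiE K (\<lambda>_. T). F ((\<lambda>(y, g). g(k := y)) x))"
    by (rule sum.reindex[OF inj_combinator[OF assms], unfolded comp_def])
  finally show ?thesis by (simp add: case_prod_beta)
qed

lemma sum_lessThan_add: "(\<Sum>j<m + n. f j) = (\<Sum>j<m. f j) + (\<Sum>j<n. f (m + j))" for n :: nat
  by (induction n) (simp_all add: add.assoc)

context trace_algebra
begin

lemma prod_cycle_reps_conj:
  assumes p: "p permutes {..<(N::nat)}" and \<pi>: "\<pi> permutes {..<N}" and a: "\<And>j. j < N \<Longrightarrow> a j \<in> A"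
  shows "(\<Prod>i\<in>cycle_reps (inv \<pi> \<circ> p \<circ> \<pi>) N. tau (cyc_word mul (a \<circ> \<pi>) (inv \<pi> \<circ> p \<circ> \<pi>) i))
       = (\<Prod>i\<in>cycle_reps p N. tau (cyc_word mul a p i))"
proof -
  let ?q = "inv \<pi> \<circ> p \<circ> \<pi>"
  have bij: "bij \<pi>" using permutes_bij[OF \<pi>] .
  have q: "?q permutes {..<N}" using p \<pi> permutes_inv[OF \<pi>] by (intro permutes_compose)
  define g where "g i = tau (cyc_word mul a p i)" for i
  have g: "g (p i) = g i" if "i < N" for i unfolding g_def using trace_cyc_word_apply[OF p that a] .
  have "orb ?q ` {..<N} = (\<lambda>i. inv \<pi> ` orb p (\<pi> i)) ` {..<N}"
    by (rule image_cong[OF refl], rule orb_conj[OF bij])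
  also have "\<dots> = (\<lambda>C. inv \<pi> ` C) ` (orb p ` (\<pi> ` {..<N}))"
    by (simp add: image_image)
  finally have orbits: "orb ?q ` {..<N} = (\<lambda>C. inv \<pi> ` C) ` (orb p ` {..<N})"
    by (simp add: permutes_image[OF \<pi>])
  have inj: "inj_on (\<lambda>C. inv \<pi> ` C) X" for X
    using inj_image_eq_iff[OF bij_is_inj[OF bij_imp_bij_inv[OF bij]]] unfolding inj_on_def by blast
  have min: "g (\<pi> (Min (inv \<pi> ` C))) = g (Min C)" if C: "C \<in> orb p ` {..<N}" for C
  proof -
    have pp: "permutation p" using permutation_if_permutes_lessThan[OF p] .
    obtain j where j: "j < N" and C_eq: "C = orb p j" using C by blast
    have "finite (inv \<pi> ` orb p j)" using finite_orb[OF pp] by simp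
    moreover have "inv \<pi> ` orb p j \<noteq> {}" using self_in_orb by blast
    ultimately have "Min (inv \<pi> ` orb p j) \<in> inv \<pi> ` orb p j" by (rule Min_in)
    then obtain y where y: "y \<in> orb p j" "Min (inv \<pi> ` orb p j) = inv \<pi> y" by blast
    have "g (\<pi> (Min (inv \<pi> ` orb p j))) = g y" using y(2) permutes_inverses(1)[OF \<pi>] by simp
    also have "\<dots> = g j" by (rule invariant_on_orb[where g=g, OF p g j y(1)])
    also have "\<dots> = g (Min (orb p j))"
      by (rule invariant_on_orb[where g=g, OF p g j Min_orb_in[OF pp], symmetric])
    finally show ?thesis unfolding C_eq .
  qed
  have "(\<Prod>i\<in>cycle_reps ?q N. tau (cyc_word mul (a \<circ> \<pi>) ?q i)) = (\<Prod>C\<in>orb ?q ` {..<N}. g (\<pi> (Min C)))"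
    by (simp only: prod_cycle_reps_orbits[OF q] g_def cyc_word_conj[OF bij])
  also have "\<dots> = (\<Prod>C\<in>orb p ` {..<N}. g (\<pi> (Min (inv \<pi> ` C))))"
    unfolding orbits by (rule prod.reindex[OF inj, unfolded comp_def])
  also have "\<dots> = (\<Prod>C\<in>orb p ` {..<N}. g (Min C))" using min by (rule prod.cong[OF refl])
  also have "\<dots> = (\<Prod>i\<in>cycle_reps p N. tau (cyc_word mul a p i))"
    by (simp only: prod_cycle_reps_orbits[OF p] g_def)
  finally show ?thesis .
qed

lemma S_permute:
  assumes \<pi>: "\<pi> permutes {..<(N::nat)}" and a: "\<And>j. j < N \<Longrightarrow> a j \<in> A"
  shows "S N (a \<circ> \<pi>) = S N a"
proof -
  define F where "F b p = of_int (sign p) * (\<Prod>i\<in>cycle_reps p N. tau (cyc_word mul b p i))" for b p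
  have \<pi>': "inv \<pi> permutes {..<N}" using permutes_inv[OF \<pi>] .
  have conj_conj: "inv \<pi> \<circ> (\<pi> \<circ> q \<circ> inv \<pi>) \<circ> \<pi> = q" "\<pi> \<circ> (inv \<pi> \<circ> q \<circ> \<pi>) \<circ> inv \<pi> = q" for q
    by (simp_all add: fun_eq_iff permutes_inverses[OF \<pi>])
  have F_conj: "F (a \<circ> \<pi>) (inv \<pi> \<circ> p \<circ> \<pi>) = F a p" if p: "p permutes {..<N}" for p
  proof -
    have "sign (inv \<pi> \<circ> p \<circ> \<pi>) = sign p"
      using permutation_if_permutes_lessThan[OF \<pi>] permutation_if_permutes_lessThan[OF \<pi>']
        permutation_if_permutes_lessThan[OF p]
      by (simp add: sign_compose permutation_compose sign_inverse)
    then show ?thesis unfolding F_def using prod_cycle_reps_conj[where a=a, OF p \<pi> a] by simp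
  qed
  have "sum (F (a \<circ> \<pi>)) {p. p permutes {..<N}} = sum (F a) {p. p permutes {..<N}}"
  proof (rule sum.reindex_bij_witness[where i="\<lambda>p. inv \<pi> \<circ> p \<circ> \<pi>" and j="\<lambda>q. \<pi> \<circ> q \<circ> inv \<pi>"])
    fix q assume "q \<in> {p. p permutes {..<N}}"
    then have q: "q permutes {..<N}" by simp
    have conj: "\<pi> \<circ> q \<circ> inv \<pi> permutes {..<N}" using q \<pi> \<pi>' by (intro permutes_compose)
    then show "\<pi> \<circ> q \<circ> inv \<pi> \<in> {p. p permutes {..<N}}" by simp
    from F_conj[OF conj] show "F a (\<pi> \<circ> q \<circ> inv \<pi>) = F (a \<circ> \<pi>) q"
      unfolding conj_conj(1) by (rule sym)
    show "inv \<pi> \<circ> (\<pi> \<circ> q \<circ> inv \<pi>) \<circ> \<pi> = q" by (rule conj_conj)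
  next
    fix q assume "q \<in> {p. p permutes {..<N}}"
    then have "q permutes {..<N}" by simp
    then show "inv \<pi> \<circ> q \<circ> \<pi> \<in> {p. p permutes {..<N}}" using \<pi> \<pi>' by (simp add: permutes_compose)
    show "\<pi> \<circ> (inv \<pi> \<circ> q \<circ> \<pi>) \<circ> inv \<pi> = q" by (rule conj_conj)
  qed
  then show ?thesis unfolding S_tau_cycle_reps F_def .
qed

lemma S_upd_add:
  assumes j: "j < N" and a: "\<And>i. i < N \<Longrightarrow> a i \<in> A" and b: "b \<in> A" and c: "c \<in> A"
  shows "S N (a(j := b + c)) = S N (a(j := b)) + S N (a(j := c))"
proof -
  have prod_upd: "(\<Prod>i\<in>cycle_reps p N. tau (cyc_word mul (a(j := x)) p i))
    = tau (mprod mul (x # map (\<lambda>k. a ((p ^^ k) j)) [1..<card (orb p j)]))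
      * (\<Prod>i\<in>cycle_reps p N - orb p j. tau (cyc_word mul a p i))"
    if p: "p permutes {..<N}" and x: "x \<in> A" for p x
  proof -
    have "\<And>i. i < N \<Longrightarrow> (a(j := x)) i \<in> A" using a x by auto
    from prod_cycle_reps_extract_cyc_word[where a="a(j := x)", OF p this j] show ?thesis
      by (simp add: cyc_word_upd_self cyc_word_upd_other permutation_if_permutes_lessThan[OF p])
  qed
  have "(\<Prod>i\<in>cycle_reps p N. tau (cyc_word mul (a(j := b + c)) p i)) =
    (\<Prod>i\<in>cycle_reps p N. tau (cyc_word mul (a(j := b)) p i)) + (\<Prod>i\<in>cycle_reps p N. tau (cyc_word mul (a(j := c)) p i))"
    if p: "p permutes {..<N}" for p
  proof -
    define T where "T = map (\<lambda>k. a ((p ^^ k) j)) [1..<card (orb p j)]"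
    have T: "set T \<subseteq> A" unfolding T_def using a funpow_permutes_lessThan[OF p j] by auto
    have "tau (mprod mul ((b + c) # T)) = tau (mprod mul (b # T)) + tau (mprod mul (c # T))"
      using b c T by (cases "T = []") (simp_all add: trace_add mprod_Cons mul_add_left mprod_closed mul_closed)
    then show ?thesis unfolding prod_upd[OF p b] prod_upd[OF p c] prod_upd[OF p add_closed[OF b c]] T_def
      by (simp add: distrib_right)
  qed
  then show ?thesis unfolding S_tau_cycle_reps by (simp add: distrib_left sum.distrib)
qed

lemma S_upd_zero:
  assumes "j < N" and "\<And>i. i < N \<Longrightarrow> a i \<in> A" and "a j = 0"
  shows "S N a = 0"
proof -
  have "a(j := 0) = a" using assms(3) by auto
  then have "S N a = S N a + S N a" using S_upd_add[where a=a, OF assms(1,2) zero_closed zero_closed] by simp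
  then show ?thesis by simp
qed

lemma S_upd_sum:
  assumes T: "finite T" and j: "j < N" and a: "\<And>i. i < N \<Longrightarrow> a i \<in> A" and b: "\<And>t. t \<in> T \<Longrightarrow> b t \<in> A"
  shows "S N (a(j := \<Sum>t\<in>T. b t)) = (\<Sum>t\<in>T. S N (a(j := b t)))"
  using T b
proof (induction T rule: finite_induct)
  case empty
  show ?case by simp (rule S_upd_zero[of j], use j a zero_closed in auto)
next
  case (insert t T)
  have "S N (a(j := \<Sum>t\<in>insert t T. b t)) = S N (a(j := b t + (\<Sum>t\<in>T. b t)))"
    using insert.hyps by simp
  also have "\<dots> = S N (a(j := b t)) + S N (a(j := \<Sum>t\<in>T. b t))"
    using insert.prems sum_closed[OF insert.hyps(1)] by (intro S_upd_add[OF j a]) auto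
  also have "\<dots> = (\<Sum>t\<in>insert t T. S N (a(j := b t)))"
    using insert.IH insert.prems insert.hyps by (simp only: sum.insert insert_iff simp_thms)
  finally show ?case .
qed

lemma S_sum_expand:
  assumes T: "finite T" and b: "\<And>j t. j < N \<Longrightarrow> t \<in> T \<Longrightarrow> b j t \<in> A"
  shows "S N (\<lambda>j. \<Sum>t\<in>T. b j t) = (\<Sum>\<phi>\<in>PiE {..<N} (\<lambda>_. T). S N (\<lambda>j. b j (\<phi> j)))"
proof -
  define c where "c k \<phi> = (\<lambda>j. if j < k then b j (\<phi> j) else \<Sum>t\<in>T. b j t)" for k \<phi>
  have c: "c k \<phi> j \<in> A" if "\<phi> \<in> PiE {..<k} (\<lambda>_. T)" "j < N" for k \<phi> j
    using that b sum_closed[OF T] unfolding c_def by (auto simp: PiE_def)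
  have "S N (c 0 undefined) = (\<Sum>\<phi>\<in>PiE {..<k} (\<lambda>_. T). S N (c k \<phi>))" if "k \<le> N" for k
    using that
  proof (induction k)
    case (Suc k)
    have step: "S N (c k \<phi>) = (\<Sum>t\<in>T. S N (c (Suc k) (\<phi>(k := t))))" if \<phi>: "\<phi> \<in> PiE {..<k} (\<lambda>_. T)" for \<phi>
    proof -
      have "c k \<phi> = (c k \<phi>)(k := \<Sum>t\<in>T. b k t)" unfolding c_def by auto
      moreover have "(c k \<phi>)(k := b k t) = c (Suc k) (\<phi>(k := t))" for t
        unfolding c_def by (auto simp: less_Suc_eq)
      moreover have "S N ((c k \<phi>)(k := \<Sum>t\<in>T. b k t)) = (\<Sum>t\<in>T. S N ((c k \<phi>)(k := b k t)))"
        by (rule S_upd_sum) (use T Suc.prems c[OF \<phi>] b in auto)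
      ultimately show ?thesis by simp
    qed
    have "S N (c 0 undefined) = (\<Sum>\<phi>\<in>PiE {..<k} (\<lambda>_. T). \<Sum>t\<in>T. S N (c (Suc k) (\<phi>(k := t))))"
      using Suc by (simp add: step)
    also have "\<dots> = (\<Sum>(t, \<phi>)\<in>T \<times> PiE {..<k} (\<lambda>_. T). S N (c (Suc k) (\<phi>(k := t))))"
      by (subst sum.swap) (simp only: sum.cartesian_product)
    also have "\<dots> = (\<Sum>\<psi>\<in>PiE {..<Suc k} (\<lambda>_. T). S N (c (Suc k) \<psi>))"
      unfolding lessThan_Suc by (rule sum_PiE_insert[symmetric]) simp
    finally show ?case .
  qed (simp add: c_def)
  from this[of N] show ?thesis
    by (simp add: c_def cong: S_tau_cong)
qed

lemma S_append:
  assumes U: "U \<subseteq> A" and V: "V \<subseteq> A" and orth: "\<And>x y. x \<in> U \<Longrightarrow> y \<in> V \<Longrightarrow> mul x y = 0"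
    and V_closed: "\<And>x y. x \<in> V \<Longrightarrow> y \<in> V \<Longrightarrow> mul x y \<in> V"
    and u: "\<And>i. i < p \<Longrightarrow> u i \<in> U"
  shows "(\<And>i. i < q \<Longrightarrow> v i \<in> V) \<Longrightarrow> S (p + q) (\<lambda>i. if i < p then u i else v (i - p)) = S p u * S q v"
proof (induction q arbitrary: v)
  case 0
  have "S p (\<lambda>i. if i < p then u i else v (i - p)) = S p u" by (rule S_tau_cong) simp
  then show ?case by simp
next
  case (Suc q)
  define w where "w = (\<lambda>i. if i < p then u i else v (i - p))"
  have w: "w i \<in> A" if "i < Suc (p + q)" for i
    using that u Suc.prems U V unfolding w_def by (auto simp: subset_iff)
  have v_A: "v i \<in> A" if "i < Suc q" for i using Suc.prems V that by auto
  have last: "w (p + q) = v q" unfolding w_def by simp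
  have left: "S (p + q) (w(j := mul (w j) (w (p + q)))) = 0" if "j < p" for j
  proof -
    have "mul (w j) (w (p + q)) = 0" using orth u Suc.prems that unfolding w_def by simp
    moreover have "S (p + q) (w(j := 0)) = 0"
      by (rule S_upd_zero[of j]) (use that w zero_closed in auto)
    ultimately show ?thesis by simp
  qed
  have right: "S (p + q) (w(p + j := mul (w (p + j)) (w (p + q)))) = S p u * S q (v(j := mul (v j) (v q)))"
    if "j < q" for j
  proof -
    have "S (p + q) (w(p + j := mul (w (p + j)) (w (p + q))))
        = S (p + q) (\<lambda>i. if i < p then u i else (v(j := mul (v j) (v q))) (i - p))"
      by (rule S_tau_cong) (auto simp: w_def)
    also have "\<dots> = S p u * S q (v(j := mul (v j) (v q)))"
      by (rule Suc.IH) (use Suc.prems V_closed that in auto)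
    finally show ?thesis .
  qed
  have "S (Suc (p + q)) w = tau (w (p + q)) * S (p + q) w - (\<Sum>j<p + q. S (p + q) (w(j := mul (w j) (w (p + q)))))"
    using S_Suc w by blast
  also have "\<dots> = S p u * (tau (v q) * S q v - (\<Sum>j<q. S q (v(j := mul (v j) (v q)))))"
  proof -
    have "S (p + q) w = S p u * S q v" using Suc.IH[of v] Suc.prems unfolding w_def by simp
    then show ?thesis unfolding sum_lessThan_add using left right last
      by (simp add: algebra_simps sum_distrib_left)
  qed
  also have "\<dots> = S p u * S (Suc q) v"
    using S_Suc[of q v] v_A by simp
  finally show ?case unfolding w_def by simp
qed

lemma alg_deg_eq_enat_iff:
  assumes "(1::'k) \<noteq> 0"
  shows "alg_deg A mul tau = enat d \<longleftrightarrow> S_vanishes A mul tau (Suc d) \<and> \<not> S_vanishes A mul tau d"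
proof
  assume "alg_deg A mul tau = enat d"
  then have ex: "\<exists>e. S_vanishes A mul tau (Suc e)" and least: "(LEAST e. S_vanishes A mul tau (Suc e)) = d"
    unfolding alg_deg_def by (auto split: if_splits)
  have "\<not> S_vanishes A mul tau d"
  proof (cases d)
    case 0
    then show ?thesis using assms unfolding S_vanishes_def by auto
  next
    case (Suc e)
    then show ?thesis using not_less_Least[of e "\<lambda>e. S_vanishes A mul tau (Suc e)"] least by auto
  qed
  then show "S_vanishes A mul tau (Suc d) \<and> \<not> S_vanishes A mul tau d"
    using LeastI_ex[OF ex] least by simp
next
  assume van: "S_vanishes A mul tau (Suc d) \<and> \<not> S_vanishes A mul tau d"
  have "(LEAST e. S_vanishes A mul tau (Suc e)) = d"
  proof (rule Least_equality)
    show "d \<le> e" if "S_vanishes A mul tau (Suc e)" for e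
      using S_vanishes_mono[OF that, of d] van by (cases "Suc e \<le> d") auto
  qed (use van in simp)
  then show "alg_deg A mul tau = enat d" unfolding alg_deg_def using van by auto
qed

end

section \<open>Finitely supported functions and convolution\<close>

lemma sum_fun_apply: "(\<Sum>t\<in>T. f t) x = (\<Sum>t\<in>T. f t x)"
  by (induction T rule: infinite_finite_induct) auto

definition supp :: "('m \<Rightarrow> 'k::zero) \<Rightarrow> 'm set" where
  "supp c = {h. c h \<noteq> 0}"

definition lin_ext :: "('m \<Rightarrow> 'k::comm_ring_1) \<Rightarrow> ('m \<Rightarrow> 'k) \<Rightarrow> 'k" where
  "lin_ext \<phi> c = (\<Sum>h\<in>supp c. c h * \<phi> h)"

lemma supp_zero [simp]: "supp 0 = {}"
  unfolding supp_def by simp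

lemma supp_add: "supp (c + d) \<subseteq> supp c \<union> supp (d :: 'm \<Rightarrow> 'k::comm_monoid_add)"
  unfolding supp_def by auto

lemma finite_supp_add: "finite (supp c) \<Longrightarrow> finite (supp d) \<Longrightarrow> finite (supp (c + d :: 'm \<Rightarrow> 'k::comm_monoid_add))"
  using supp_add by (metis finite_Un finite_subset)

lemma finite_supp_sum: "(\<And>t. t \<in> T \<Longrightarrow> finite (supp (c t))) \<Longrightarrow> finite (supp (\<Sum>t\<in>T. c t))"
  by (induction T rule: infinite_finite_induct) (auto intro: finite_supp_add)

lemma lin_ext_superset: "finite H \<Longrightarrow> supp c \<subseteq> H \<Longrightarrow> lin_ext \<phi> c = (\<Sum>h\<in>H. c h * \<phi> h)"
  unfolding lin_ext_def by (rule sum.mono_neutral_left) (auto simp: supp_def)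

lemma lin_ext_zero [simp]: "lin_ext \<phi> 0 = 0"
  unfolding lin_ext_def by simp

lemma lin_ext_add:
  assumes "finite (supp c)" "finite (supp d)"
  shows "lin_ext \<phi> (c + d) = lin_ext \<phi> c + lin_ext \<phi> d"
proof -
  let ?H = "supp c \<union> supp d"
  have "lin_ext \<phi> (c + d) = (\<Sum>h\<in>?H. (c + d) h * \<phi> h)"
    using supp_add[of c d] assms by (intro lin_ext_superset) auto
  moreover have "lin_ext \<phi> c = (\<Sum>h\<in>?H. c h * \<phi> h)" "lin_ext \<phi> d = (\<Sum>h\<in>?H. d h * \<phi> h)"
    using assms by (auto intro: lin_ext_superset)
  ultimately show ?thesis by (simp add: distrib_right sum.distrib)
qed

lemma lin_ext_sum:
  "(\<And>t. t \<in> T \<Longrightarrow> finite (supp (c t))) \<Longrightarrow> lin_ext \<phi> (\<Sum>t\<in>T. c t) = (\<Sum>t\<in>T. lin_ext \<phi> (c t))"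
  by (induction T rule: infinite_finite_induct) (simp_all add: lin_ext_add finite_supp_sum)

lemma lin_ext_eqI:
  assumes "finite (supp c)" "finite (supp d)" "\<And>\<phi>. lin_ext \<phi> c = lin_ext \<phi> d"
  shows "c = d"
proof
  fix h
  have delta: "lin_ext (\<lambda>x. if x = h then 1 else 0) e = e h" if "finite (supp e)" for e :: "'a \<Rightarrow> 'b"
  proof -
    have "lin_ext (\<lambda>x. if x = h then 1 else 0) e = (\<Sum>x\<in>insert h (supp e). e x * (if x = h then 1 else 0))"
      using that by (intro lin_ext_superset) auto
    also have "\<dots> = e h" using that by (simp add: if_distrib sum.delta cong: if_cong)
    finally show ?thesis .
  qed
  show "c h = d h" using delta[OF assms(1)] delta[OF assms(2)] assms(3) by metis
qed

lemma supp_conv: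
  "supp (conv cmp a b) \<subseteq> (\<lambda>(f, g). cmp f g) ` (supp a \<times> supp b)"
proof
  fix h assume h: "h \<in> supp (conv cmp a b)"
  show "h \<in> (\<lambda>(f, g). cmp f g) ` (supp a \<times> supp b)"
  proof (rule ccontr)
    assume "h \<notin> (\<lambda>(f, g). cmp f g) ` (supp a \<times> supp b)"
    then have "conv cmp a b h = 0" unfolding conv_def by (intro sum.neutral ballI) (auto simp: supp_def)
    then show False using h unfolding supp_def by simp
  qed
qed

lemma finite_supp_conv: "finite (supp a) \<Longrightarrow> finite (supp b) \<Longrightarrow> finite (supp (conv cmp a b))"
  by (rule finite_subset[OF supp_conv]) simp

lemma lin_ext_conv:
  assumes a: "finite (supp a)" and b: "finite (supp b)"
    and F: "finite F" "supp a \<subseteq> F" and G: "finite G" "supp b \<subseteq> G"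
  shows "lin_ext \<phi> (conv cmp a b) = (\<Sum>f\<in>F. \<Sum>g\<in>G. a f * b g * \<phi> (cmp f g))"
proof -
  define H where "H = (\<lambda>(f, g). cmp f g) ` (supp a \<times> supp b)"
  have H: "finite H" unfolding H_def using a b by simp
  have "lin_ext \<phi> (conv cmp a b) = (\<Sum>h\<in>H. conv cmp a b h * \<phi> h)"
    using supp_conv[of cmp a b] H unfolding H_def by (intro lin_ext_superset) auto
  also have "\<dots> = (\<Sum>h\<in>H. \<Sum>f\<in>supp a. \<Sum>g\<in>supp b. if cmp f g = h then a f * b g * \<phi> h else 0)"
    unfolding conv_def supp_def[symmetric] sum_distrib_right by (intro sum.cong refl) simp
  also have "\<dots> = (\<Sum>f\<in>supp a. \<Sum>g\<in>supp b. \<Sum>h\<in>H. if cmp f g = h then a f * b g * \<phi> h else 0)"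
    by (subst sum.swap) (simp add: sum.swap[of _ H])
  also have "\<dots> = (\<Sum>f\<in>supp a. \<Sum>g\<in>supp b. a f * b g * \<phi> (cmp f g))"
  proof (intro sum.cong refl)
    fix f g assume "f \<in> supp a" "g \<in> supp b"
    then have "cmp f g \<in> H" unfolding H_def by auto
    then show "(\<Sum>h\<in>H. if cmp f g = h then a f * b g * \<phi> h else 0) = a f * b g * \<phi> (cmp f g)"
      using H by (simp add: sum.delta)
  qed
  also have "\<dots> = (\<Sum>f\<in>supp a. \<Sum>g\<in>G. a f * b g * \<phi> (cmp f g))"
    by (intro sum.cong refl sum.mono_neutral_left G) (auto simp: supp_def)
  also have "\<dots> = (\<Sum>f\<in>F. \<Sum>g\<in>G. a f * b g * \<phi> (cmp f g))"
    by (intro sum.mono_neutral_left F) (auto simp: supp_def)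
  finally show ?thesis .
qed

lemma lin_ext_conv_supp:
  "finite (supp a) \<Longrightarrow> finite (supp b)
    \<Longrightarrow> lin_ext \<phi> (conv cmp a b) = (\<Sum>f\<in>supp a. \<Sum>g\<in>supp b. a f * b g * \<phi> (cmp f g))"
  by (rule lin_ext_conv) simp_all

lemma conv_add_left:
  assumes "finite (supp a)" "finite (supp b)" "finite (supp c)"
  shows "conv cmp (a + b) c = conv cmp a c + conv cmp b c"
proof (rule lin_ext_eqI)
  show "finite (supp (conv cmp (a + b) c))" "finite (supp (conv cmp a c + conv cmp b c))"
    using assms by (simp_all add: finite_supp_conv finite_supp_add)
  fix \<phi>
  let ?F = "supp a \<union> supp b"
  have "lin_ext \<phi> (conv cmp (a + b) c) = (\<Sum>f\<in>?F. \<Sum>g\<in>supp c. (a + b) f * c g * \<phi> (cmp f g))"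
    using assms supp_add[of a b] by (intro lin_ext_conv) (auto simp: finite_supp_add)
  moreover have "lin_ext \<phi> (conv cmp a c) = (\<Sum>f\<in>?F. \<Sum>g\<in>supp c. a f * c g * \<phi> (cmp f g))"
    "lin_ext \<phi> (conv cmp b c) = (\<Sum>f\<in>?F. \<Sum>g\<in>supp c. b f * c g * \<phi> (cmp f g))"
    using assms by (auto intro: lin_ext_conv)
  ultimately show "lin_ext \<phi> (conv cmp (a + b) c) = lin_ext \<phi> (conv cmp a c + conv cmp b c)"
    using assms by (simp add: lin_ext_add finite_supp_conv distrib_right sum.distrib)
qed

lemma conv_add_right:
  assumes "finite (supp a)" "finite (supp b)" "finite (supp c)"
  shows "conv cmp c (a + b) = conv cmp c a + conv cmp c b"
proof (rule lin_ext_eqI)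
  show "finite (supp (conv cmp c (a + b)))" "finite (supp (conv cmp c a + conv cmp c b))"
    using assms by (simp_all add: finite_supp_conv finite_supp_add)
  fix \<phi>
  let ?F = "supp a \<union> supp b"
  have "lin_ext \<phi> (conv cmp c (a + b)) = (\<Sum>g\<in>supp c. \<Sum>f\<in>?F. c g * (a + b) f * \<phi> (cmp g f))"
    using assms supp_add[of a b] by (intro lin_ext_conv) (auto simp: finite_supp_add)
  moreover have "lin_ext \<phi> (conv cmp c a) = (\<Sum>g\<in>supp c. \<Sum>f\<in>?F. c g * a f * \<phi> (cmp g f))"
    "lin_ext \<phi> (conv cmp c b) = (\<Sum>g\<in>supp c. \<Sum>f\<in>?F. c g * b f * \<phi> (cmp g f))"
    using assms by (auto intro: lin_ext_conv)
  ultimately show "lin_ext \<phi> (conv cmp c (a + b)) = lin_ext \<phi> (conv cmp c a + conv cmp c b)"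
    using assms by (simp add: lin_ext_add finite_supp_conv distrib_left distrib_right sum.distrib)
qed

lemma conv_zero_left [simp]: "conv cmp 0 c = 0"
  unfolding conv_def by (simp add: zero_fun_def)

lemma conv_zero_right [simp]: "conv cmp c 0 = 0"
  unfolding conv_def by (simp add: zero_fun_def)

lemma conv_sum_left:
  "(\<And>t. t \<in> T \<Longrightarrow> finite (supp (a t))) \<Longrightarrow> finite (supp c)
    \<Longrightarrow> conv cmp (\<Sum>t\<in>T. a t) c = (\<Sum>t\<in>T. conv cmp (a t) c)"
  by (induction T rule: infinite_finite_induct) (simp_all add: conv_add_left finite_supp_sum)

lemma conv_sum_right:
  "(\<And>t. t \<in> T \<Longrightarrow> finite (supp (a t))) \<Longrightarrow> finite (supp c)
    \<Longrightarrow> conv cmp c (\<Sum>t\<in>T. a t) = (\<Sum>t\<in>T. conv cmp c (a t))"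
  by (induction T rule: infinite_finite_induct) (simp_all add: conv_add_right finite_supp_sum)

lemma conv_assoc:
  assumes a: "finite (supp a)" and b: "finite (supp b)" and c: "finite (supp c)"
    and assoc: "\<And>f g h. f \<in> supp a \<Longrightarrow> g \<in> supp b \<Longrightarrow> h \<in> supp c \<Longrightarrow> cmp f (cmp g h) = cmp (cmp f g) h"
  shows "conv cmp (conv cmp a b) c = conv cmp a (conv cmp b c)"
proof (rule lin_ext_eqI)
  have ab: "finite (supp (conv cmp a b))" and bc: "finite (supp (conv cmp b c))"
    using finite_supp_conv a b c by blast+
  show "finite (supp (conv cmp (conv cmp a b) c))" "finite (supp (conv cmp a (conv cmp b c)))"
    using finite_supp_conv ab bc a c by blast+
  fix \<phi>
  have "lin_ext \<phi> (conv cmp (conv cmp a b) c)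
      = (\<Sum>e\<in>supp (conv cmp a b). \<Sum>h\<in>supp c. conv cmp a b e * c h * \<phi> (cmp e h))"
    by (rule lin_ext_conv_supp[OF ab c])
  also have "\<dots> = (\<Sum>h\<in>supp c. c h * lin_ext (\<lambda>e. \<phi> (cmp e h)) (conv cmp a b))"
    unfolding lin_ext_def by (subst sum.swap) (simp add: sum_distrib_left mult_ac)
  also have "\<dots> = (\<Sum>h\<in>supp c. \<Sum>f\<in>supp a. \<Sum>g\<in>supp b. a f * (b g * c h * \<phi> (cmp f (cmp g h))))"
    by (intro sum.cong refl) (simp add: lin_ext_conv_supp[OF a b] sum_distrib_left assoc mult_ac)
  also have "\<dots> = (\<Sum>f\<in>supp a. \<Sum>g\<in>supp b. \<Sum>h\<in>supp c. a f * (b g * c h * \<phi> (cmp f (cmp g h))))"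
    by (subst sum.swap) (simp add: sum.swap[of _ "supp c"])
  also have "\<dots> = (\<Sum>f\<in>supp a. a f * lin_ext (\<lambda>e. \<phi> (cmp f e)) (conv cmp b c))"
    by (simp add: lin_ext_conv_supp[OF b c] sum_distrib_left)
  also have "\<dots> = lin_ext \<phi> (conv cmp a (conv cmp b c))"
    unfolding lin_ext_conv_supp[OF a bc] unfolding lin_ext_def by (simp add: sum_distrib_left mult_ac)
  finally show "lin_ext \<phi> (conv cmp (conv cmp a b) c) = lin_ext \<phi> (conv cmp a (conv cmp b c))" .
qed

section \<open>The algebras of a category with a loop function\<close>

locale category_loop_function =
  fixes n :: nat and Hom :: "nat \<Rightarrow> nat \<Rightarrow> 'm set" and cmp :: "'m \<Rightarrow> 'm \<Rightarrow> 'm" and idm :: "nat \<Rightarrow> 'm"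
    and \<alpha> :: "nat \<times> 'm \<Rightarrow> 'k::comm_ring_1"
  assumes category: "is_category n Hom cmp idm" and loop_function: "loop_function n Hom cmp \<alpha>"
begin

lemma cmp_closed: "\<lbrakk>i < n; j < n; l < n; f \<in> Hom i j; g \<in> Hom j l\<rbrakk> \<Longrightarrow> cmp g f \<in> Hom i l"
  using category[unfolded is_category_def, THEN conjunct2, THEN conjunct1] by blast

lemma cmp_assoc:
  "\<lbrakk>i < n; j < n; l < n; m < n; f \<in> Hom i j; g \<in> Hom j l; h \<in> Hom l m\<rbrakk>
    \<Longrightarrow> cmp h (cmp g f) = cmp (cmp h g) f"
  using category[unfolded is_category_def, THEN conjunct2, THEN conjunct2, THEN conjunct1] by blast

lemma alpha_cmp_commute:
  assumes "i < n" "l < n" "g \<in> Hom i l" "f \<in> Hom l i"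
  shows "\<alpha> (i, cmp f g) = \<alpha> (l, cmp g f)"
proof -
  have "((i, cmp f g), (l, cmp g f)) \<in> loop_rel n Hom cmp"
    unfolding loop_rel_def using assms by blast
  then have "((i, cmp f g), (l, cmp g f)) \<in> loop_equiv n Hom cmp"
    unfolding loop_equiv_def by blast
  then show ?thesis using loop_function unfolding loop_function_def by blast
qed

lemma lin_iff: "c \<in> lin S \<longleftrightarrow> finite (supp c) \<and> supp c \<subseteq> S"
  unfolding lin_def supp_def by simp

lemma lin_zero: "0 \<in> lin S"
  unfolding lin_iff by simp

lemma lin_add: "a \<in> lin S \<Longrightarrow> b \<in> lin S \<Longrightarrow> a + b \<in> lin S" for a b :: "'m \<Rightarrow> 'k"
  unfolding lin_iff using supp_add[of a b] finite_supp_add[of a b] by blast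

lemma lin_sum: "(\<And>t. t \<in> T \<Longrightarrow> a t \<in> lin S) \<Longrightarrow> (\<Sum>t\<in>T. a t) \<in> lin S" for a :: "'t \<Rightarrow> 'm \<Rightarrow> 'k"
  by (induction T rule: infinite_finite_induct) (auto simp: lin_zero lin_add)

lemma conv_closed:
  assumes "i < n" "j < n" "l < n" "a \<in> lin (Hom l i)" "b \<in> lin (Hom j l)"
  shows "conv cmp a b \<in> lin (Hom j i)"
proof -
  have "finite (supp a)" "finite (supp b)" using assms unfolding lin_iff by auto
  moreover have "(\<lambda>(f, g). cmp f g) ` (supp a \<times> supp b) \<subseteq> Hom j i"
    using assms cmp_closed[of j l i] unfolding lin_iff by auto
  ultimately show ?thesis
    using supp_conv[of cmp a b] finite_supp_conv[of a b cmp] unfolding lin_iff by blast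
qed

lemma conv_assoc_lin:
  assumes "i < n" "j < n" "l < n" "m < n"
    and "a \<in> lin (Hom l i)" "b \<in> lin (Hom m l)" "c \<in> lin (Hom j m)"
  shows "conv cmp (conv cmp a b) c = conv cmp a (conv cmp b c)"
  using assms unfolding lin_iff by (intro conv_assoc) (auto intro!: cmp_assoc[of j m l i])

lemma alpha_lin_eq_lin_ext: "alpha_lin \<alpha> i c = lin_ext (\<lambda>b. \<alpha> (i, b)) c"
  unfolding alpha_lin_def lin_ext_def supp_def ..

lemma alpha_lin_zero [simp]: "alpha_lin \<alpha> i 0 = 0"
  by (simp add: alpha_lin_eq_lin_ext)

lemma alpha_lin_conv_commute:
  assumes i: "i < n" and l: "l < n" and a: "a \<in> lin (Hom l i)" and b: "b \<in> lin (Hom i l)"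
  shows "alpha_lin \<alpha> i (conv cmp a b) = alpha_lin \<alpha> l (conv cmp b a)"
proof -
  have fa: "finite (supp a)" and fb: "finite (supp b)" using a b unfolding lin_iff by auto
  have "alpha_lin \<alpha> i (conv cmp a b) = (\<Sum>f\<in>supp a. \<Sum>g\<in>supp b. a f * b g * \<alpha> (i, cmp f g))"
    unfolding alpha_lin_eq_lin_ext by (rule lin_ext_conv_supp[OF fa fb])
  also have "\<dots> = (\<Sum>f\<in>supp a. \<Sum>g\<in>supp b. b g * a f * \<alpha> (l, cmp g f))"
  proof (intro sum.cong refl)
    fix f g assume "f \<in> supp a" "g \<in> supp b"
    then have "\<alpha> (i, cmp f g) = \<alpha> (l, cmp g f)"
      using a b unfolding lin_iff by (intro alpha_cmp_commute[OF i l]) auto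
    then show "a f * b g * \<alpha> (i, cmp f g) = b g * a f * \<alpha> (l, cmp g f)" by (simp add: mult_ac)
  qed
  also have "\<dots> = alpha_lin \<alpha> l (conv cmp b a)"
    unfolding alpha_lin_eq_lin_ext lin_ext_conv_supp[OF fb fa] by (rule sum.swap)
  finally show ?thesis .
qed

lemma trace_algebra_End:
  assumes x: "x < n"
  shows "trace_algebra (lin (Hom x x)) (conv cmp) (alpha_lin \<alpha> x)"
proof
  fix a b c :: "'m \<Rightarrow> 'k"
  assume a: "a \<in> lin (Hom x x)" and b: "b \<in> lin (Hom x x)" and c: "c \<in> lin (Hom x x)"
  show "conv cmp a b \<in> lin (Hom x x)" by (rule conv_closed[OF x x x a b])
  show "conv cmp (conv cmp a b) c = conv cmp a (conv cmp b c)" by (rule conv_assoc_lin[OF x x x x a b c])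
  show "alpha_lin \<alpha> x (conv cmp a b) = alpha_lin \<alpha> x (conv cmp b a)"
    by (rule alpha_lin_conv_commute[OF x x a b])
  show "a + b \<in> lin (Hom x x)" by (rule lin_add[OF a b])
  show "conv cmp a (b + c) = conv cmp a b + conv cmp a c"
    using a b c unfolding lin_iff by (intro conv_add_right) auto
  show "conv cmp (b + c) a = conv cmp b a + conv cmp c a"
    using a b c unfolding lin_iff by (intro conv_add_left) auto
  show "alpha_lin \<alpha> x (a + b) = alpha_lin \<alpha> x a + alpha_lin \<alpha> x b"
    using a b unfolding lin_iff alpha_lin_eq_lin_ext by (intro lin_ext_add) auto
qed (rule lin_zero)

lemma mat_alg_iff:
  "x \<in> mat_alg n Hom \<longleftrightarrow> (\<forall>i<n. \<forall>j<n. x i j \<in> lin (Hom j i)) \<and> (\<forall>i j. n \<le> i \<or> n \<le> j \<longrightarrow> x i j = 0)"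
  unfolding mat_alg_def by (simp add: zero_fun_def)

lemma finite_supp_mat_entry: "x \<in> mat_alg n Hom \<Longrightarrow> finite (supp (x i j))" for x :: "nat \<Rightarrow> nat \<Rightarrow> 'm \<Rightarrow> 'k"
  unfolding mat_alg_iff lin_iff by (cases "i < n \<and> j < n") auto

lemma mat_mult_entry: "i < n \<Longrightarrow> j < n \<Longrightarrow> mat_mult n cmp x y i j = (\<Sum>l<n. conv cmp (x i l) (y l j))"
  unfolding mat_mult_def by (rule ext) (simp add: sum_fun_apply)

lemma mat_mult_outside: "\<not> (i < n \<and> j < n) \<Longrightarrow> mat_mult n cmp x y i j = 0"
  unfolding mat_mult_def by (auto simp: zero_fun_def)

lemma mat_mult_closed:
  fixes x y :: "nat \<Rightarrow> nat \<Rightarrow> 'm \<Rightarrow> 'k"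
  assumes x: "x \<in> mat_alg n Hom" and y: "y \<in> mat_alg n Hom"
  shows "mat_mult n cmp x y \<in> mat_alg n Hom"
proof -
  have "mat_mult n cmp x y i j \<in> lin (Hom j i)" if i: "i < n" and j: "j < n" for i j
    unfolding mat_mult_entry[OF i j]
  proof (rule lin_sum)
    fix l assume "l \<in> {..<n}"
    then show "conv cmp (x i l) (y l j) \<in> lin (Hom j i)"
      using x y i j unfolding mat_alg_iff by (intro conv_closed[OF i j]) auto
  qed
  then show ?thesis unfolding mat_alg_iff by (auto simp: mat_mult_outside)
qed

lemma mat_alg_zero: "(0 :: nat \<Rightarrow> nat \<Rightarrow> 'm \<Rightarrow> 'k) \<in> mat_alg n Hom"
  unfolding mat_alg_iff by (simp add: lin_zero)

lemma mat_alg_add: "x \<in> mat_alg n Hom \<Longrightarrow> y \<in> mat_alg n Hom \<Longrightarrow> x + y \<in> mat_alg n Hom"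
  for x y :: "nat \<Rightarrow> nat \<Rightarrow> 'm \<Rightarrow> 'k"
  unfolding mat_alg_iff by (auto simp: lin_add)

lemma mat_mult_assoc:
  fixes x y z :: "nat \<Rightarrow> nat \<Rightarrow> 'm \<Rightarrow> 'k"
  assumes x: "x \<in> mat_alg n Hom" and y: "y \<in> mat_alg n Hom" and z: "z \<in> mat_alg n Hom"
  shows "mat_mult n cmp (mat_mult n cmp x y) z = mat_mult n cmp x (mat_mult n cmp y z)"
proof (rule ext, rule ext)
  fix i j
  show "mat_mult n cmp (mat_mult n cmp x y) z i j = mat_mult n cmp x (mat_mult n cmp y z) i j"
  proof (cases "i < n \<and> j < n")
    case True
    have fin: "finite (supp (conv cmp (w i l) (w' l j)))"
      if "w \<in> mat_alg n Hom" "w' \<in> mat_alg n Hom" for w w' :: "nat \<Rightarrow> nat \<Rightarrow> 'm \<Rightarrow> 'k" and i l j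
      using that by (intro finite_supp_conv finite_supp_mat_entry)
    have "mat_mult n cmp (mat_mult n cmp x y) z i j = (\<Sum>m<n. \<Sum>l<n. conv cmp (conv cmp (x i l) (y l m)) (z m j))"
      using True x y z fin by (simp add: mat_mult_entry conv_sum_left finite_supp_mat_entry)
    also have "\<dots> = (\<Sum>m<n. \<Sum>l<n. conv cmp (x i l) (conv cmp (y l m) (z m j)))"
    proof (intro sum.cong refl)
      fix m l assume "m \<in> {..<n}" "l \<in> {..<n}"
      then show "conv cmp (conv cmp (x i l) (y l m)) (z m j) = conv cmp (x i l) (conv cmp (y l m) (z m j))"
        using True x y z unfolding mat_alg_iff by (intro conv_assoc_lin[of i j l m]) auto
    qed
    also have "\<dots> = mat_mult n cmp x (mat_mult n cmp y z) i j"
      using True x y z fin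
      by (subst sum.swap) (simp add: mat_mult_entry conv_sum_right finite_supp_mat_entry)
    finally show ?thesis .
  qed (simp add: mat_mult_outside)
qed

lemma mat_mult_add_right:
  fixes x y z :: "nat \<Rightarrow> nat \<Rightarrow> 'm \<Rightarrow> 'k"
  assumes "x \<in> mat_alg n Hom" "y \<in> mat_alg n Hom" "z \<in> mat_alg n Hom"
  shows "mat_mult n cmp x (y + z) = mat_mult n cmp x y + mat_mult n cmp x z"
proof (intro ext)
  fix i j h
  show "mat_mult n cmp x (y + z) i j h = (mat_mult n cmp x y + mat_mult n cmp x z) i j h"
  proof (cases "i < n \<and> j < n")
    case True
    have "conv cmp (x i l) (y l j + z l j) = conv cmp (x i l) (y l j) + conv cmp (x i l) (z l j)" for l
      using assms by (intro conv_add_right finite_supp_mat_entry)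
    then show ?thesis using True by (simp add: mat_mult_entry sum.distrib)
  qed (simp add: mat_mult_outside)
qed

lemma mat_mult_add_left:
  fixes x y z :: "nat \<Rightarrow> nat \<Rightarrow> 'm \<Rightarrow> 'k"
  assumes "x \<in> mat_alg n Hom" "y \<in> mat_alg n Hom" "z \<in> mat_alg n Hom"
  shows "mat_mult n cmp (y + z) x = mat_mult n cmp y x + mat_mult n cmp z x"
proof (intro ext)
  fix i j h
  show "mat_mult n cmp (y + z) x i j h = (mat_mult n cmp y x + mat_mult n cmp z x) i j h"
  proof (cases "i < n \<and> j < n")
    case True
    have "conv cmp (y i l + z i l) (x l j) = conv cmp (y i l) (x l j) + conv cmp (z i l) (x l j)" for l
      using assms by (intro conv_add_left finite_supp_mat_entry)
    then show ?thesis using True by (simp add: mat_mult_entry sum.distrib)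
  qed (simp add: mat_mult_outside)
qed

lemma mat_trace_add:
  "x \<in> mat_alg n Hom \<Longrightarrow> y \<in> mat_alg n Hom \<Longrightarrow> mat_trace n \<alpha> (x + y) = mat_trace n \<alpha> x + mat_trace n \<alpha> y"
  for x y :: "nat \<Rightarrow> nat \<Rightarrow> 'm \<Rightarrow> 'k"
  unfolding mat_trace_def alpha_lin_eq_lin_ext
  by (simp add: lin_ext_add finite_supp_mat_entry sum.distrib)

lemma mat_trace_mult_commute:
  fixes x y :: "nat \<Rightarrow> nat \<Rightarrow> 'm \<Rightarrow> 'k"
  assumes x: "x \<in> mat_alg n Hom" and y: "y \<in> mat_alg n Hom"
  shows "mat_trace n \<alpha> (mat_mult n cmp x y) = mat_trace n \<alpha> (mat_mult n cmp y x)"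
proof -
  have trace_mult: "mat_trace n \<alpha> (mat_mult n cmp w w') = (\<Sum>i<n. \<Sum>l<n. alpha_lin \<alpha> i (conv cmp (w i l) (w' l i)))"
    if "w \<in> mat_alg n Hom" "w' \<in> mat_alg n Hom" for w w' :: "nat \<Rightarrow> nat \<Rightarrow> 'm \<Rightarrow> 'k"
    using that unfolding mat_trace_def alpha_lin_eq_lin_ext
    by (intro sum.cong refl) (simp add: mat_mult_entry lin_ext_sum finite_supp_conv finite_supp_mat_entry)
  have "(\<Sum>i<n. \<Sum>l<n. alpha_lin \<alpha> i (conv cmp (x i l) (y l i)))
      = (\<Sum>i<n. \<Sum>l<n. alpha_lin \<alpha> l (conv cmp (y l i) (x i l)))"
    using x y unfolding mat_alg_iff by (intro sum.cong refl alpha_lin_conv_commute) auto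
  then show ?thesis unfolding trace_mult[OF x y] trace_mult[OF y x] by (rule trans) (rule sum.swap)
qed

lemma trace_algebra_mat: "trace_algebra (mat_alg n Hom) (mat_mult n cmp) (mat_trace n \<alpha>)"
  by unfold_locales
    (simp_all add: mat_mult_closed mat_mult_assoc mat_trace_mult_commute mat_alg_zero mat_alg_add
      mat_mult_add_right mat_mult_add_left mat_trace_add)

end

section \<open>Block matrices\<close>

lemma sum_eq_single:
  "x \<in> X \<Longrightarrow> finite X \<Longrightarrow> (\<And>l. l \<in> X \<Longrightarrow> l \<noteq> x \<Longrightarrow> f l = 0) \<Longrightarrow> (\<Sum>l\<in>X. f l) = f x"
  by (subst sum.remove[of X x]) (auto intro: sum.neutral)

lemma card_fiber_permute:
  assumes \<pi>: "\<pi> permutes {..<(N::nat)}"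
  shows "card {j. j < N \<and> r (\<pi> j) = x} = card {j. j < N \<and> r j = x}"
proof -
  have "\<pi> ` {j. j < N \<and> r (\<pi> j) = x} = {j. j < N \<and> r j = x}"
  proof (intro equalityI subsetI)
    fix j assume "j \<in> \<pi> ` {j. j < N \<and> r (\<pi> j) = x}"
    then obtain i where "i < N" "r (\<pi> i) = x" "j = \<pi> i" by blast
    moreover have "\<pi> i < N" using permutes_in_image[OF \<pi>] \<open>i < N\<close> by simp
    ultimately show "j \<in> {j. j < N \<and> r j = x}" by simp
  next
    fix j assume j: "j \<in> {j. j < N \<and> r j = x}"
    have "inv \<pi> j < N" using permutes_in_image[OF permutes_inv[OF \<pi>]] j by simp
    moreover have "\<pi> (inv \<pi> j) = j" using permutes_inverses(1)[OF \<pi>] .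
    ultimately show "j \<in> \<pi> ` {j. j < N \<and> r (\<pi> j) = x}" using j by (metis (mono_tags, lifting) image_eqI mem_Collect_eq)
  qed
  moreover have "inj_on \<pi> {j. j < N \<and> r (\<pi> j) = x}"
    using permutes_inj[OF \<pi>] by (rule inj_on_subset) simp
  ultimately show ?thesis using card_image by fastforce
qed

lemma sum_card_fibers:
  assumes "\<And>j. j < N \<Longrightarrow> r j < (n::nat)"
  shows "(\<Sum>x<n. card {j. j < N \<and> r j = x}) = N"
proof -
  have "(\<Sum>x<n. card {j. j < N \<and> r j = x}) = (\<Sum>x<n. \<Sum>j<N. if r j = x then 1 else 0)"
  proof (intro sum.cong refl)
    fix x
    have "card {j. j < N \<and> r j = x} = (\<Sum>j\<in>{j \<in> {..<N}. r j = x}. 1)"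
      by (simp add: Collect_conj_eq lessThan_def)
    also have "\<dots> = (\<Sum>j<N. if r j = x then 1 else 0)" by (rule sum.inter_filter) simp
    finally show "card {j. j < N \<and> r j = x} = (\<Sum>j<N. if r j = x then 1 else 0)" .
  qed
  also have "\<dots> = (\<Sum>j<N. \<Sum>x<n. if r j = x then 1 else 0)" by (rule sum.swap)
  also have "\<dots> = (\<Sum>j<N. 1)" using assms by (intro sum.cong refl) (simp add: sum.delta)
  also have "\<dots> = N" by simp
  finally show ?thesis .
qed

lemma exists_fiber_exceeding:
  assumes r: "\<And>j. j < N \<Longrightarrow> r j < (n::nat)" and N: "(\<Sum>x<n. d x) < N"
  shows "\<exists>x<n. d x < card {j. j < N \<and> r j = x}"
proof (rule ccontr)
  assume "\<not> ?thesis"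
  then have "(\<Sum>x<n. card {j. j < N \<and> r j = x}) \<le> (\<Sum>x<n. d x)" by (intro sum_mono) auto
  then show False using sum_card_fibers[OF r] N by simp
qed

context category_loop_function
begin

interpretation M: trace_algebra "mat_alg n Hom" "mat_mult n cmp" "mat_trace n \<alpha>"
  by (rule trace_algebra_mat)

definition in_row :: "nat \<Rightarrow> (nat \<Rightarrow> nat \<Rightarrow> 'm \<Rightarrow> 'k) \<Rightarrow> bool" where
  "in_row x M \<longleftrightarrow> M \<in> mat_alg n Hom \<and> (\<forall>i j. i \<noteq> x \<longrightarrow> M i j = 0)"

definition in_block :: "nat \<Rightarrow> nat \<Rightarrow> (nat \<Rightarrow> nat \<Rightarrow> 'm \<Rightarrow> 'k) \<Rightarrow> bool" where
  "in_block r s M \<longleftrightarrow> M \<in> mat_alg n Hom \<and> (\<forall>i j. (i, j) \<noteq> (r, s) \<longrightarrow> M i j = 0)"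

definition block :: "nat \<Rightarrow> nat \<Rightarrow> (nat \<Rightarrow> nat \<Rightarrow> 'm \<Rightarrow> 'k) \<Rightarrow> (nat \<Rightarrow> nat \<Rightarrow> 'm \<Rightarrow> 'k)" where
  "block r s M = (\<lambda>i j. if i = r \<and> j = s then M i j else 0)"

lemma in_row_mult:
  assumes x: "x < n" and M: "in_row x M" and M': "in_row x M'"
  shows "in_row x (mat_mult n cmp M M') \<and> mat_mult n cmp M M' x x = conv cmp (M x x) (M' x x)"
proof
  show "in_row x (mat_mult n cmp M M')"
    unfolding in_row_def
  proof (intro conjI allI impI)
    show "mat_mult n cmp M M' \<in> mat_alg n Hom" using M M' mat_mult_closed unfolding in_row_def by blast
    fix i j assume "i \<noteq> x"
    then show "mat_mult n cmp M M' i j = 0"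
      using M unfolding in_row_def by (cases "i < n \<and> j < n") (simp_all add: mat_mult_entry mat_mult_outside)
  qed
  have "mat_mult n cmp M M' x x = (\<Sum>l<n. conv cmp (M x l) (M' l x))" using mat_mult_entry[OF x x] .
  also have "\<dots> = conv cmp (M x x) (M' x x)"
    by (rule sum_eq_single) (use x M' in \<open>auto simp: in_row_def\<close>)
  finally show "mat_mult n cmp M M' x x = conv cmp (M x x) (M' x x)" .
qed

lemma in_row_mprod:
  assumes x: "x < n"
  shows "ms \<noteq> [] \<Longrightarrow> \<forall>M\<in>set ms. in_row x M \<Longrightarrow>
    in_row x (mprod (mat_mult n cmp) ms) \<and> mprod (mat_mult n cmp) ms x x = mprod (conv cmp) (map (\<lambda>M. M x x) ms)"
proof (induction ms)
  case (Cons M ms)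
  then show ?case using in_row_mult[OF x] by (cases "ms = []") (auto simp: mprod_Cons)
qed simp

lemma mat_trace_in_row: "x < n \<Longrightarrow> in_row x M \<Longrightarrow> mat_trace n \<alpha> M = alpha_lin \<alpha> x (M x x)"
  unfolding mat_trace_def by (rule sum_eq_single) (auto simp: in_row_def)

lemma S_in_row:
  assumes x: "x < n" and a: "\<And>j. j < N \<Longrightarrow> in_row x (a j)"
  shows "M.S N a = S_tau (conv cmp) (alpha_lin \<alpha> x) N (\<lambda>j. a j x x)"
  unfolding S_tau_def
proof (intro sum.cong refl arg_cong2[where f="(*)"] prod.cong)
  fix p i assume "p \<in> {p. p permutes {..<N}}" and "i \<in> {i. i < N \<and> i = Min (orb p i)}"
  then have p: "p permutes {..<N}" and i: "i < N" by auto
  define ms where "ms = map (\<lambda>k. a ((p ^^ k) i)) [0..<card (orb p i)]"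
  have "ms \<noteq> []" unfolding ms_def using card_orb_pos[OF permutation_if_permutes_lessThan[OF p]] by simp
  moreover have "\<forall>M\<in>set ms. in_row x M" unfolding ms_def using a funpow_permutes_lessThan[OF p i] by auto
  ultimately show "mat_trace n \<alpha> (cyc_word (mat_mult n cmp) a p i) = alpha_lin \<alpha> x (cyc_word (conv cmp) (\<lambda>j. a j x x) p i)"
    using in_row_mprod[OF x] mat_trace_in_row[OF x] unfolding cyc_word_def ms_def by (simp add: comp_def)
qed

lemma in_block_block: "M \<in> mat_alg n Hom \<Longrightarrow> in_block r s (block r s M)"
  unfolding in_block_def block_def mat_alg_iff by (auto simp: lin_zero)

lemma sum_blocks:
  assumes M: "M \<in> mat_alg n Hom"
  shows "M = (\<Sum>t\<in>{..<n} \<times> {..<n}. block (fst t) (snd t) M)"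
proof (rule ext, rule ext)
  fix i j
  show "M i j = (\<Sum>t\<in>{..<n} \<times> {..<n}. block (fst t) (snd t) M) i j"
  proof (cases "i < n \<and> j < n")
    case True
    then show ?thesis unfolding sum_fun_apply by (subst sum_eq_single[of "(i, j)"]) (auto simp: block_def)
  next
    case False
    then have "M i j = 0" using M unfolding mat_alg_iff by auto
    then show ?thesis using False by (auto simp: sum_fun_apply block_def intro!: sum.neutral)
  qed
qed

lemma in_block_mult:
  assumes M: "in_block r s M" and M': "in_block r' s' M'"
  shows "in_block r s' (mat_mult n cmp M M')"
  unfolding in_block_def
proof (intro conjI allI impI)
  show "mat_mult n cmp M M' \<in> mat_alg n Hom" using M M' mat_mult_closed unfolding in_block_def by blast
  fix i j assume ij: "(i, j) \<noteq> (r, s')"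
  have "conv cmp (M i l) (M' l j) = 0" for l
    using M M' ij unfolding in_block_def by (cases "i = r") auto
  then show "mat_mult n cmp M M' i j = 0"
    by (cases "i < n \<and> j < n") (simp_all add: mat_mult_entry mat_mult_outside)
qed

lemma in_block_in_row: "in_block x s M \<Longrightarrow> in_row x M"
  unfolding in_block_def in_row_def by auto

lemma in_block_mat_alg: "in_block r s M \<Longrightarrow> M \<in> mat_alg n Hom"
  unfolding in_block_def by auto

lemma S_in_row_vanishes:
  assumes x: "x < n" and van: "S_vanishes (lin (Hom x x)) (conv cmp) (alpha_lin \<alpha> x) N"
    and a: "\<And>j. j < N \<Longrightarrow> in_row x (a j)"
  shows "M.S N a = 0"
proof -
  have "a j x x \<in> lin (Hom x x)" if "j < N" for j using a[OF that] x unfolding in_row_def mat_alg_iff by auto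
  then show ?thesis using van S_in_row[OF x a] unfolding S_vanishes_def by auto
qed

text \<open>Induction on N: an entry outside block row x is moved to the last slot, and the recursion
  \<open>S_Suc\<close> then lowers N without changing the number of entries in row x. When every entry
  lies in row x, S is computed inside End(X_x).\<close>
lemma S_in_blocks_vanishes:
  assumes x: "x < n"
    and van: "\<And>m. d < m \<Longrightarrow> S_vanishes (lin (Hom x x)) (conv cmp) (alpha_lin \<alpha> x) m"
  shows "\<forall>j<N. r j < n \<and> s j < n \<and> in_block (r j) (s j) (a j) \<Longrightarrow> d < card {j. j < N \<and> r j = x}
     \<Longrightarrow> M.S N a = 0"
proof (induction N arbitrary: a r s)
  case (Suc N)
  note blocks = Suc.prems(1)
  show ?case
  proof (cases "\<forall>t<Suc N. r t = x")
    case True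
    have "{j. j < Suc N \<and> r j = x} = {..<Suc N}" using True by auto
    then have "d < Suc N" using Suc.prems(2) by simp
    then show ?thesis
      by (rule S_in_row_vanishes[OF x van]) (use blocks True in \<open>auto intro: in_block_in_row\<close>)
  next
    case False
    then obtain t where t: "t < Suc N" "r t \<noteq> x" by auto
    define \<pi> where "\<pi> = transpose t N"
    have \<pi>: "\<pi> permutes {..<Suc N}" unfolding \<pi>_def using t by (intro permutes_swap_id) auto
    define a' r' s' where "a' = a \<circ> \<pi>" and "r' = r \<circ> \<pi>" and "s' = s \<circ> \<pi>"
    have blocks': "r' j < n \<and> s' j < n \<and> in_block (r' j) (s' j) (a' j)" if "j < Suc N" for j
      unfolding r'_def s'_def a'_def using blocks permutes_in_image[OF \<pi>] that by auto
    have count: "card {j. j < N \<and> r' j = x} = card {j. j < Suc N \<and> r j = x}"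
    proof -
      have "{j. j < Suc N \<and> r' j = x} = {j. j < N \<and> r' j = x}"
        using t unfolding r'_def \<pi>_def by (auto simp: less_Suc_eq)
      then show ?thesis using card_fiber_permute[OF \<pi>, of r x] unfolding r'_def comp_def by simp
    qed
    have "a j \<in> mat_alg n Hom" if "j < Suc N" for j using blocks that in_block_mat_alg by blast
    then have "M.S (Suc N) a = M.S (Suc N) a'" unfolding a'_def using M.S_permute[OF \<pi>, of a] by simp
    moreover have "M.S N a' = 0"
      by (rule Suc.IH[of r' s']) (use blocks' count Suc.prems(2) in auto)
    moreover have "M.S N (a'(j := mat_mult n cmp (a' j) (a' N))) = 0" if j: "j < N" for j
    proof (rule Suc.IH[of r' "s'(j := s' N)"])
      have "in_block (r' j) (s' N) (mat_mult n cmp (a' j) (a' N))"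
        using blocks'[of j] blocks'[of N] j by (intro in_block_mult[of "r' j" "s' j" _ "r' N" "s' N"]) auto
      then show "\<forall>i<N. r' i < n \<and> (s'(j := s' N)) i < n \<and> in_block (r' i) ((s'(j := s' N)) i) ((a'(j := mat_mult n cmp (a' j) (a' N))) i)"
        using blocks' j by auto
      show "d < card {i. i < N \<and> r' i = x}" using count Suc.prems(2) by simp
    qed
    moreover have "M.S (Suc N) a' = mat_trace n \<alpha> (a' N) * M.S N a'
       - (\<Sum>j<N. M.S N (a'(j := mat_mult n cmp (a' j) (a' N))))"
      by (rule M.S_Suc) (use blocks' in_block_mat_alg in blast)
    ultimately show ?thesis by simp
  qed
qed simp

lemma S_vanishes_mat:
  assumes van: "\<And>x. x < n \<Longrightarrow> S_vanishes (lin (Hom x x)) (conv cmp) (alpha_lin \<alpha> x) (Suc (d x))"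
  shows "S_vanishes (mat_alg n Hom) (mat_mult n cmp) (mat_trace n \<alpha>) (Suc (\<Sum>x<n. d x))"
  unfolding S_vanishes_def
proof (intro allI impI)
  fix a :: "nat \<Rightarrow> nat \<Rightarrow> nat \<Rightarrow> 'm \<Rightarrow> 'k"
  define N where "N = Suc (\<Sum>x<n. d x)"
  assume "\<forall>i<Suc (\<Sum>x<n. d x). a i \<in> mat_alg n Hom"
  then have a: "\<And>i. i < N \<Longrightarrow> a i \<in> mat_alg n Hom" unfolding N_def by simp
  define T where "T = {..<n} \<times> {..<n}"
  define b where "b j t = block (fst t) (snd t) (a j)" for j t
  have "M.S N a = M.S N (\<lambda>j. \<Sum>t\<in>T. b j t)"
    by (rule S_tau_cong) (use a sum_blocks in \<open>auto simp: b_def T_def\<close>)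
  also have "\<dots> = (\<Sum>\<phi>\<in>PiE {..<N} (\<lambda>_. T). M.S N (\<lambda>j. b j (\<phi> j)))"
  proof (rule M.S_sum_expand)
    show "finite T" unfolding T_def by simp
    show "b j t \<in> mat_alg n Hom" if "j < N" for j t
      unfolding b_def using in_block_mat_alg[OF in_block_block[OF a[OF that]]] .
  qed
  also have "\<dots> = 0"
  proof (rule sum.neutral, rule ballI)
    fix \<phi> assume \<phi>: "\<phi> \<in> PiE {..<N} (\<lambda>_. T)"
    have blocks: "fst (\<phi> j) < n \<and> snd (\<phi> j) < n \<and> in_block (fst (\<phi> j)) (snd (\<phi> j)) (b j (\<phi> j))"
      if "j < N" for j
      using \<phi> that a in_block_block unfolding b_def T_def by (auto simp: PiE_def Pi_def mem_Times_iff)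
    obtain x where x: "x < n" "d x < card {j. j < N \<and> fst (\<phi> j) = x}"
      using exists_fiber_exceeding[of N "\<lambda>j. fst (\<phi> j)" n d] blocks unfolding N_def by auto
    have "\<And>m. d x < m \<Longrightarrow> S_vanishes (lin (Hom x x)) (conv cmp) (alpha_lin \<alpha> x) m"
      using trace_algebra.S_vanishes_mono[OF trace_algebra_End[OF x(1)] van[OF x(1)]] by simp
    then show "M.S N (\<lambda>j. b j (\<phi> j)) = 0"
      by (rule S_in_blocks_vanishes[OF x(1), where r="\<lambda>j. fst (\<phi> j)" and s="\<lambda>j. snd (\<phi> j)"])
        (use blocks x(2) in auto)
  qed
  finally show "M.S (Suc (\<Sum>x<n. d x)) a = 0" unfolding N_def .
qed

definition diag_block :: "nat \<Rightarrow> ('m \<Rightarrow> 'k) \<Rightarrow> (nat \<Rightarrow> nat \<Rightarrow> 'm \<Rightarrow> 'k)" where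
  "diag_block r c = (\<lambda>i j. if i = r \<and> j = r then c else 0)"

definition in_corner :: "nat \<Rightarrow> (nat \<Rightarrow> nat \<Rightarrow> 'm \<Rightarrow> 'k) \<Rightarrow> bool" where
  "in_corner r M \<longleftrightarrow> M \<in> mat_alg n Hom \<and> (\<forall>i j. \<not> (i < r \<and> j < r) \<longrightarrow> M i j = 0)"

lemma in_block_diag_block: "r < n \<Longrightarrow> c \<in> lin (Hom r r) \<Longrightarrow> in_block r r (diag_block r c)"
  unfolding in_block_def diag_block_def mat_alg_iff by (auto simp: lin_zero)

lemma diag_block_mult:
  assumes r: "r < n" and c: "c \<in> lin (Hom r r)" and c': "c' \<in> lin (Hom r r)"
  shows "mat_mult n cmp (diag_block r c) (diag_block r c') = diag_block r (conv cmp c c')"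
proof -
  have "in_block r r (mat_mult n cmp (diag_block r c) (diag_block r c'))"
    using in_block_mult[OF in_block_diag_block[OF r c] in_block_diag_block[OF r c']] .
  moreover have "mat_mult n cmp (diag_block r c) (diag_block r c') r r = conv cmp c c'"
    using in_row_mult[OF r in_block_in_row[OF in_block_diag_block[OF r c]] in_block_in_row[OF in_block_diag_block[OF r c']]]
    by (simp add: diag_block_def)
  ultimately show ?thesis unfolding in_block_def diag_block_def by (intro ext) auto
qed

lemma mat_mult_in_corner_diag_block:
  assumes u: "in_corner r u"
  shows "mat_mult n cmp u (diag_block r c) = 0"
proof (rule ext, rule ext)
  fix i j
  have "conv cmp (u i l) (diag_block r c l j) = 0" for l
    using u unfolding in_corner_def diag_block_def by (cases "l = r \<and> j = r") auto
  then show "mat_mult n cmp u (diag_block r c) i j = 0 i j"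
    by (cases "i < n \<and> j < n") (simp_all add: mat_mult_entry mat_mult_outside)
qed

lemma S_append_diag_block:
  assumes r: "r < n" and a: "\<And>j. j < p \<Longrightarrow> in_corner r (a j)" and c: "\<And>j. j < q \<Longrightarrow> c j \<in> lin (Hom r r)"
  shows "M.S (p + q) (\<lambda>i. if i < p then a i else diag_block r (c (i - p)))
    = M.S p a * S_tau (conv cmp) (alpha_lin \<alpha> r) q c"
proof -
  let ?V = "{diag_block r c | c. c \<in> lin (Hom r r)}"
  have "M.S (p + q) (\<lambda>i. if i < p then a i else diag_block r (c (i - p))) = M.S p a * M.S q (\<lambda>j. diag_block r (c j))"
  proof (rule M.S_append[where U="{M. in_corner r M}" and V="?V"])
    show "{M. in_corner r M} \<subseteq> mat_alg n Hom" unfolding in_corner_def by auto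
    show "?V \<subseteq> mat_alg n Hom" using in_block_diag_block[OF r] in_block_mat_alg by blast
    show "mat_mult n cmp x y = 0" if "x \<in> {M. in_corner r M}" "y \<in> ?V" for x y
      using that mat_mult_in_corner_diag_block by auto
    show "mat_mult n cmp x y \<in> ?V" if "x \<in> ?V" "y \<in> ?V" for x y
      using that diag_block_mult[OF r] conv_closed[OF r r r] by blast
  qed (use a c in auto)
  also have "M.S q (\<lambda>j. diag_block r (c j)) = S_tau (conv cmp) (alpha_lin \<alpha> r) q c"
    using S_in_row[where a="\<lambda>j. diag_block r (c j)", OF r] in_block_in_row[OF in_block_diag_block[OF r c]]
    by (simp add: diag_block_def)
  finally show ?thesis .
qed

lemma S_diag_blocks:
  assumes c: "\<And>x j. x < n \<Longrightarrow> j < d x \<Longrightarrow> c x j \<in> lin (Hom x x)"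
  shows "r \<le> n \<Longrightarrow> \<exists>a. (\<forall>j<(\<Sum>x<r. d x). in_corner r (a j))
    \<and> M.S (\<Sum>x<r. d x) a = (\<Prod>x<r. S_tau (conv cmp) (alpha_lin \<alpha> x) (d x) (c x))"
proof (induction r)
  case (Suc r)
  then have r: "r < n" by simp
  obtain a where a: "\<forall>j<(\<Sum>x<r. d x). in_corner r (a j)"
    and Sa: "M.S (\<Sum>x<r. d x) a = (\<Prod>x<r. S_tau (conv cmp) (alpha_lin \<alpha> x) (d x) (c x))"
    using Suc by auto
  define p where "p = (\<Sum>x<r. d x)"
  define w where "w = (\<lambda>i. if i < p then a i else diag_block r (c r (i - p)))"
  have "M.S (p + d r) w = M.S p a * S_tau (conv cmp) (alpha_lin \<alpha> r) (d r) (c r)"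
    unfolding w_def by (rule S_append_diag_block[OF r]) (use a c r in \<open>auto simp: p_def\<close>)
  then have "M.S (p + d r) w = (\<Prod>x<Suc r. S_tau (conv cmp) (alpha_lin \<alpha> x) (d x) (c x))"
    using Sa unfolding p_def by (simp add: mult.commute)
  moreover have "in_corner (Suc r) (w j)" if "j < p + d r" for j
  proof (cases "j < p")
    case True then show ?thesis using a unfolding w_def p_def in_corner_def by auto
  next
    case False
    then have "c r (j - p) \<in> lin (Hom r r)" using c r that by simp
    then show ?thesis
      using False in_block_mat_alg[OF in_block_diag_block[OF r]] unfolding w_def in_corner_def diag_block_def
      by auto
  qed
  ultimately show ?case unfolding p_def by auto
qed simp

end

theorem mainTheorem5:
  fixes n :: nat
    and Hom :: "nat \<Rightarrow> nat \<Rightarrow> 'm set"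
    and cmp :: "'m \<Rightarrow> 'm \<Rightarrow> 'm"
    and idm :: "nat \<Rightarrow> 'm"
    and \<alpha> :: "nat \<times> 'm \<Rightarrow> 'k::field_char_0"
  assumes "is_category n Hom cmp idm"
    and "pseudocharacter_cat n Hom cmp \<alpha>"
  shows "(\<forall>x\<in>mat_alg n Hom. \<forall>y\<in>mat_alg n Hom.
            mat_trace n \<alpha> (mat_mult n cmp x y) = mat_trace n \<alpha> (mat_mult n cmp y x))
    \<and> alg_deg (mat_alg n Hom) (mat_mult n cmp) (mat_trace n \<alpha>) \<noteq> \<infinity>
    \<and> alg_deg (mat_alg n Hom) (mat_mult n cmp) (mat_trace n \<alpha>) = (\<Sum>i<n. obj_deg Hom cmp \<alpha> i)"
proof -
  interpret category_loop_function n Hom cmp idm \<alpha>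
    using assms unfolding pseudocharacter_cat_def by unfold_locales auto
  interpret M: trace_algebra "mat_alg n Hom" "mat_mult n cmp" "mat_trace n \<alpha>"
    by (rule trace_algebra_mat)
  let ?S = "\<lambda>x. S_tau (conv cmp) (alpha_lin \<alpha> x)"
    and ?van = "\<lambda>x. S_vanishes (lin (Hom x x)) (conv cmp) (alpha_lin \<alpha> x)"
  have "\<forall>x\<in>{..<n}. \<exists>e. obj_deg Hom cmp \<alpha> x = enat e"
    using assms(2) unfolding pseudocharacter_cat_def by auto
  then obtain d where d: "\<And>x. x < n \<Longrightarrow> obj_deg Hom cmp \<alpha> x = enat (d x)" by (metis lessThan_iff bchoice)
  have deg: "?van x (Suc (d x)) \<and> \<not> ?van x (d x)" if "x < n" for x
    using trace_algebra.alg_deg_eq_enat_iff[OF trace_algebra_End[OF that]] d[OF that] by (simp add: obj_deg_def)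
  then have "\<forall>x\<in>{..<n}. \<exists>c. (\<forall>j<d x. c j \<in> lin (Hom x x)) \<and> ?S x (d x) c \<noteq> 0"
    unfolding S_vanishes_def by auto
  then obtain c where c: "\<And>x j. x < n \<Longrightarrow> j < d x \<Longrightarrow> c x j \<in> lin (Hom x x)"
    and Sc: "\<And>x. x < n \<Longrightarrow> ?S x (d x) (c x) \<noteq> 0" by (metis lessThan_iff bchoice)
  obtain a where a: "\<forall>j<(\<Sum>x<n. d x). in_corner n (a j)"
    and Sa: "M.S (\<Sum>x<n. d x) a = (\<Prod>x<n. ?S x (d x) (c x))"
    using S_diag_blocks[where c=c and d=d, OF c order.refl] by blast
  have "\<not> S_vanishes (mat_alg n Hom) (mat_mult n cmp) (mat_trace n \<alpha>) (\<Sum>x<n. d x)"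
    using a Sa Sc unfolding S_vanishes_def in_corner_def by auto
  then have "alg_deg (mat_alg n Hom) (mat_mult n cmp) (mat_trace n \<alpha>) = enat (\<Sum>x<n. d x)"
    using M.alg_deg_eq_enat_iff S_vanishes_mat deg by simp
  moreover have "(\<Sum>x<n. obj_deg Hom cmp \<alpha> x) = enat (\<Sum>x<n. d x)"
    by (simp add: d of_nat_eq_enat[symmetric])
  ultimately show ?thesis using mat_trace_mult_commute by simp
qed

end
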